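(* $\mathbf{DSPACE(n)}\subseteq \mathbf{AM}_{\textnormal{q}}^{=1}$ \textnormal{(2ADfA)}. Moreover, suppose language $L$ can be recognized by a DTM that runs in linear space and time $O \left( t(|w|)\right)$ on given input $w$. Then $L$ can be strongly verified by a rational-valued 2ADfA with expected running time $O\left(|w|t(|w|)\right)$.
   Context: An affine state of an $m$-state affine register is a vector $v\in\mathbb{R}^m$ whose entries sum to $1$; affine operators are real matrices whose columns each sum to $1$; weighting observes basis state $e_j$ with probability $|v_j|/\|v\|_1$. A 2ADfA is a two-way deterministic finite automaton on the read-only input $¢ w\$$ (left end-marker ¢, right end-marker \$) equipped with finitely many affine registers, each updated by an affine operator or weighted at each step, with the deterministic state and head move then depending on state, symbol and weighting outcomes; it halts upon entering an accepting or rejecting state. Rational-valued means all affine operators have rational entries. The 2ADfA is the verifier in an Arthur–Merlin proof system (public coins: deterministic states, head moves and weighting outcomes are revealed to the all-powerful prover). Strong verification with error $\epsilon<1/2$: there is a prover such that every $w\in L$ is accepted with probability at least $1-\epsilon$, and for every $w\notin L$ and every prover, $w$ is rejected with probability at least $1-\epsilon$. $\mathbf{AM}_{\textnormal{q}}^{=1}(\text{2ADfA})$ is the class of languages strongly verifiable by such AM systems with rational-valued 2ADfA verifiers with bounded error and perfect completeness (members accepted with probability $1$). DTM denotes a deterministic Turing machine. *)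

theory Defs
  imports Complex_Main
begin

text \<open>States and tape symbols are natural numbers below given bounds; tape symbol 0 is the blank.\<close>

record 'a dtm =
  tm_nst   :: nat
  tm_nsym  :: nat
  tm_q0    :: nat
  tm_acc   :: nat
  tm_rej   :: nat
  tm_delta :: "nat \<Rightarrow> nat \<Rightarrow> nat \<times> nat \<times> int"
  tm_enc   :: "'a \<Rightarrow> nat"

definition wf_dtm :: "'a dtm \<Rightarrow> bool" where
  "wf_dtm M \<longleftrightarrow>
     tm_q0 M < tm_nst M \<and> tm_acc M < tm_nst M \<and> tm_rej M < tm_nst M \<and> tm_acc M \<noteq> tm_rej M \<and>
     inj (tm_enc M) \<and> (\<forall>x. 0 < tm_enc M x \<and> tm_enc M x < tm_nsym M) \<and>
     (\<forall>q < tm_nst M. \<forall>s < tm_nsym M.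
        (case tm_delta M q s of (q', s', d) \<Rightarrow> q' < tm_nst M \<and> s' < tm_nsym M \<and> d \<in> {-1, 0, 1}))"

type_synonym tm_conf = "nat \<times> (int \<Rightarrow> nat) \<times> int"

definition tm_step :: "'a dtm \<Rightarrow> tm_conf \<Rightarrow> tm_conf" where
  "tm_step M cf = (case cf of (q, T, h) \<Rightarrow>
     if q = tm_acc M \<or> q = tm_rej M then (q, T, h)
     else (case tm_delta M q (T h) of (q', s', d) \<Rightarrow> (q', T(h := s'), h + d)))"

definition tm_init :: "'a dtm \<Rightarrow> 'a list \<Rightarrow> tm_conf" where
  "tm_init M w = (tm_q0 M,
     (\<lambda>i. if 0 \<le> i \<and> i < int (length w) then tm_enc M (w ! nat i) else 0), 0)"

definition tm_conf :: "'a dtm \<Rightarrow> 'a list \<Rightarrow> nat \<Rightarrow> tm_conf" where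
  "tm_conf M w n = (tm_step M ^^ n) (tm_init M w)"

definition tm_halted :: "'a dtm \<Rightarrow> 'a list \<Rightarrow> nat \<Rightarrow> bool" where
  "tm_halted M w n \<longleftrightarrow> fst (tm_conf M w n) \<in> {tm_acc M, tm_rej M}"

definition tm_decides :: "'a dtm \<Rightarrow> 'a list set \<Rightarrow> bool" where
  "tm_decides M L \<longleftrightarrow>
     (\<forall>w. \<exists>n. tm_halted M w n \<and> (fst (tm_conf M w n) = tm_acc M \<longleftrightarrow> w \<in> L))"

definition tm_time :: "'a dtm \<Rightarrow> 'a list \<Rightarrow> nat" where
  "tm_time M w = (LEAST n. tm_halted M w n)"

definition tm_linear_space :: "'a dtm \<Rightarrow> bool" where
  "tm_linear_space M \<longleftrightarrow> (\<exists>c::nat. \<forall>w n.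
     \<bar>snd (snd (tm_conf M w n))\<bar> \<le> int c * (int (length w) + 1))"

definition DSPACE_lin :: "'a list set set" where
  "DSPACE_lin = {L. \<exists>M. wf_dtm M \<and> tm_decides M L \<and> tm_linear_space M}"

datatype 'a tape_sym = LEnd | Sym 'a | REnd

definition tape_at :: "'a list \<Rightarrow> nat \<Rightarrow> 'a tape_sym" where
  "tape_at w p = (if p = 0 then LEnd else if p \<le> length w then Sym (w ! (p - 1)) else REnd)"

text \<open>In state q, reading input symbol a and prover
  message c, register i is updated by the affine matrix A (v_act ... = Some A, A row col)
  or weighted (v_act ... = None).  Then new state and head move are given by v_trans
  from q, a, c and the vector oc of weighting outcomes.\<close>

record 'a verifier =
  v_nst   :: nat
  v_nmsg  :: nat
  v_q0    :: nat
  v_acc   :: "nat set"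
  v_rej   :: "nat set"
  v_nreg  :: nat
  v_rdim  :: "nat \<Rightarrow> nat"
  v_act   :: "nat \<Rightarrow> 'a tape_sym \<Rightarrow> nat \<Rightarrow> nat \<Rightarrow> (nat \<Rightarrow> nat \<Rightarrow> real) option"
  v_trans :: "nat \<Rightarrow> 'a tape_sym \<Rightarrow> nat \<Rightarrow> (nat \<Rightarrow> nat) \<Rightarrow> nat \<times> int"

definition wf_verifier :: "'a verifier \<Rightarrow> bool" where
  "wf_verifier V \<longleftrightarrow>
     v_q0 V < v_nst V \<and> v_acc V \<subseteq> {..<v_nst V} \<and> v_rej V \<subseteq> {..<v_nst V} \<and>
     v_acc V \<inter> v_rej V = {} \<and>
     (\<forall>i < v_nreg V. 1 \<le> v_rdim V i) \<and>
     (\<forall>q < v_nst V. \<forall>a. \<forall>c < v_nmsg V. \<forall>i < v_nreg V. \<forall>A.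
        v_act V q a c i = Some A \<longrightarrow> (\<forall>k < v_rdim V i. (\<Sum>r<v_rdim V i. A r k) = 1)) \<and>
     (\<forall>q < v_nst V. \<forall>a. \<forall>c < v_nmsg V. \<forall>oc.
        (case v_trans V q a c oc of (q', d) \<Rightarrow>
           q' < v_nst V \<and> d \<in> {-1, 0, 1} \<and> (a = LEnd \<longrightarrow> d \<noteq> -1) \<and> (a = REnd \<longrightarrow> d \<noteq> 1)))"

definition rational_verifier :: "'a verifier \<Rightarrow> bool" where
  "rational_verifier V \<longleftrightarrow>
     (\<forall>q a c i A. v_act V q a c i = Some A \<longrightarrow>
        (\<forall>r < v_rdim V i. \<forall>k < v_rdim V i. A r k \<in> \<rat>))"

text \<open>Public history: the list of (prover message, weighting outcomes) of all past steps;
  together with the input it determines all states and head positions.\<close>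
type_synonym hist = "(nat \<times> (nat \<Rightarrow> nat)) list"
type_synonym 'a prover = "'a list \<Rightarrow> hist \<Rightarrow> nat"
type_synonym vconf = "nat \<times> nat \<times> (nat \<Rightarrow> nat \<Rightarrow> real) \<times> hist"

definition valid_prover :: "'a verifier \<Rightarrow> 'a prover \<Rightarrow> bool" where
  "valid_prover V P \<longleftrightarrow> (\<forall>w h. P w h < v_nmsg V)"

definition weighed :: "'a verifier \<Rightarrow> nat \<Rightarrow> 'a tape_sym \<Rightarrow> nat \<Rightarrow> nat \<Rightarrow> bool" where
  "weighed V q a c i \<longleftrightarrow> i < v_nreg V \<and> v_act V q a c i = None"

definition outs :: "'a verifier \<Rightarrow> nat \<Rightarrow> 'a tape_sym \<Rightarrow> nat \<Rightarrow> (nat \<Rightarrow> nat) set" where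
  "outs V q a c = {oc. \<forall>i. (if weighed V q a c i then oc i < v_rdim V i else oc i = 0)}"

definition oprob :: "'a verifier \<Rightarrow> nat \<Rightarrow> 'a tape_sym \<Rightarrow> nat \<Rightarrow> (nat \<Rightarrow> nat \<Rightarrow> real)
    \<Rightarrow> (nat \<Rightarrow> nat) \<Rightarrow> real" where
  "oprob V q a c R oc = (\<Prod>i\<in>{i. weighed V q a c i}.
      \<bar>R i (oc i)\<bar> / (\<Sum>j<v_rdim V i. \<bar>R i j\<bar>))"

definition vstep :: "'a verifier \<Rightarrow> nat \<Rightarrow> 'a tape_sym \<Rightarrow> nat \<Rightarrow> (nat \<Rightarrow> nat \<Rightarrow> real)
    \<Rightarrow> (nat \<Rightarrow> nat) \<Rightarrow> (nat \<Rightarrow> nat \<Rightarrow> real)" where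
  "vstep V q a c R oc = (\<lambda>i. if i < v_nreg V then
       (case v_act V q a c i of
          None \<Rightarrow> (\<lambda>j. if j = oc i then 1 else 0)
        | Some A \<Rightarrow> (\<lambda>r. \<Sum>k<v_rdim V i. A r k * R i k))
     else R i)"



fun reach :: "'a verifier \<Rightarrow> nat set \<Rightarrow> 'a prover \<Rightarrow> 'a list \<Rightarrow> nat \<Rightarrow> vconf \<Rightarrow> real" where
  "reach V S P w 0 (q, p, R, h) = (if q \<in> S then 1 else 0)"
| "reach V S P w (Suc n) (q, p, R, h) =
     (if q \<in> S then 1 else if q \<in> v_acc V \<union> v_rej V then 0 else
      (let a = tape_at w p; c = P w h in
       \<Sum>oc\<in>outs V q a c. oprob V q a c R oc *
          reach V S P w n (fst (v_trans V q a c oc), nat (int p + snd (v_trans V q a c oc)),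
                           vstep V q a c R oc, h @ [(c, oc)])))"

definition start :: "'a verifier \<Rightarrow> vconf" where
  "start V = (v_q0 V, 0, (\<lambda>i j. if j = 0 then 1 else 0), [])"

definition acc_prob :: "'a verifier \<Rightarrow> 'a prover \<Rightarrow> 'a list \<Rightarrow> real" where
  "acc_prob V P w = (SUP n. reach V (v_acc V) P w n (start V))"

definition rej_prob :: "'a verifier \<Rightarrow> 'a prover \<Rightarrow> 'a list \<Rightarrow> real" where
  "rej_prob V P w = (SUP n. reach V (v_rej V) P w n (start V))"

text \<open>Expected running time: sum over n of Pr[not halted within n steps]; finite iff summable.\<close>
definition exp_time_le :: "'a verifier \<Rightarrow> 'a prover \<Rightarrow> 'a list \<Rightarrow> real \<Rightarrow> bool" where
  "exp_time_le V P w B \<longleftrightarrow>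
     (let f = (\<lambda>n. 1 - (reach V (v_acc V) P w n (start V) + reach V (v_rej V) P w n (start V)))
      in summable f \<and> suminf f \<le> B)"

definition sound :: "'a verifier \<Rightarrow> 'a list set \<Rightarrow> real \<Rightarrow> bool" where
  "sound V L \<epsilon> \<longleftrightarrow> (\<forall>w. w \<notin> L \<longrightarrow> (\<forall>P. valid_prover V P \<longrightarrow> rej_prob V P w \<ge> 1 - \<epsilon>))"

definition AM_q_1_2ADfA :: "'a list set set" where
  "AM_q_1_2ADfA = {L. \<exists>V \<epsilon>. wf_verifier V \<and> rational_verifier V \<and> \<epsilon> < 1/2 \<and>
      (\<exists>P. valid_prover V P \<and> (\<forall>w\<in>L. acc_prob V P w = 1)) \<and> sound V L \<epsilon>}"

end

(*
  The verifier simulates the machine M round by round, with the prover streaming configurations.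
  Since M works in space c(|w| + 1), a configuration is determined by the state, the scanned
  symbol and the two tape windows of width W = K(|w| + 1) (K = 2c + 2) left and right of the
  head; read as base-b numbers (b = number of tape symbols) the windows are integers L and R.
  The verifier cannot store them in its finite control, but an affine register can: the vector
  (1 - x1 - x2 - x3 - x4, x1, x2, x3, x4) holds four integers, and x := b x + c is an affine
  operator with integer entries. So the prover streams the digits of L and R, each in K sweeps of
  the input head, and the verifier accumulates them in Horner form.

  One machine step changes L and R by shifting one digit in or out, so "the configuration of time t
  follows from that of time t - 1" becomes two linear equations e1 = e2 = 0 in the integers held by
  the register. The verifier maps the register to (1, e1, -e1, e2, -e2) and weighs it: with
  probability (2|e1| + 2|e2|) / (1 + 2|e1| + 2|e2|) >= 2/3 it sees a nonzero basis state and
  rejects whenever the prover lied. The weighed register collapses to the zero vector and receives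
  the next configuration, while a copy of the current one, kept in the second register, plays
  the role of the previous configuration in the next round. The honest prover is never caught,
  and each round costs O(|w|) steps, which gives the expected running time O(|w| t(|w|)).
*)

theory Submission
  imports Defs
begin

lemma reach_nonneg: "0 \<le> reach V S P w n c"
proof (induction n arbitrary: c)
  case 0
  then show ?case by (cases c) auto
next
  case (Suc n)
  obtain q p R h where c: "c = (q, p, R, h)" by (cases c)
  show ?case unfolding c
    by (auto simp: Let_def oprob_def
        intro!: sum_nonneg mult_nonneg_nonneg prod_nonneg divide_nonneg_nonneg Suc.IH)
qed

definition succ_conf :: "'a verifier \<Rightarrow> 'a prover \<Rightarrow> 'a list \<Rightarrow> vconf \<Rightarrow> (nat \<Rightarrow> nat) \<Rightarrow> vconf" where
  "succ_conf V P w cf oc = (case cf of (q, p, R, h) \<Rightarrow>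
     (fst (v_trans V q (tape_at w p) (P w h) oc), nat (int p + snd (v_trans V q (tape_at w p) (P w h) oc)),
      vstep V q (tape_at w p) (P w h) R oc, h @ [(P w h, oc)]))"

lemma reach_Suc:
  "reach V S P w (Suc n) (q, p, R, h) =
    (if q \<in> S then 1 else if q \<in> v_acc V \<union> v_rej V then 0 else
     (\<Sum>oc\<in>outs V q (tape_at w p) (P w h).
        oprob V q (tape_at w p) (P w h) R oc * reach V S P w n (succ_conf V P w (q, p, R, h) oc)))"
  by (simp add: succ_conf_def Let_def)

lemma sum_outs_unweighed:
  assumes "\<And>i. \<not> weighed V q a c i"
  shows "(\<Sum>oc\<in>outs V q a c. oprob V q a c R oc * f oc) = f (\<lambda>_. 0)"
proof -
  have "outs V q a c = {\<lambda>_. 0}" using assms by (auto simp: outs_def)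
  moreover have "oprob V q a c R (\<lambda>_. 0) = 1" using assms by (simp add: oprob_def)
  ultimately show ?thesis by simp
qed

definition outcome_at :: "nat \<Rightarrow> nat \<Rightarrow> nat \<Rightarrow> nat" where
  "outcome_at i u = (\<lambda>j. if j = i then u else 0)"

lemma sum_outs_single_weighed:
  assumes "\<And>j. weighed V q a c j \<longleftrightarrow> j = i"
  shows "(\<Sum>oc\<in>outs V q a c. oprob V q a c R oc * f oc) =
    (\<Sum>u<v_rdim V i. \<bar>R i u\<bar> / (\<Sum>j<v_rdim V i. \<bar>R i j\<bar>) * f (outcome_at i u))"
proof -
  have "outs V q a c = outcome_at i ` {..<v_rdim V i}"
  proof (intro set_eqI iffI)
    fix oc
    assume "oc \<in> outs V q a c"
    then have "\<forall>j. if j = i then oc j < v_rdim V i else oc j = 0" by (simp add: outs_def assms)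
    then have "oc = outcome_at i (oc i)" "oc i < v_rdim V i"
      unfolding outcome_at_def by (metis (full_types))+
    then show "oc \<in> outcome_at i ` {..<v_rdim V i}" by blast
  qed (auto simp: outs_def assms outcome_at_def)
  moreover have "inj_on (outcome_at i) {..<v_rdim V i}"
    by (rule inj_onI) (metis outcome_at_def)
  moreover have "oprob V q a c R (outcome_at i u) = \<bar>R i u\<bar> / (\<Sum>j<v_rdim V i. \<bar>R i j\<bar>)" for u
  proof -
    have "{j. weighed V q a c j} = {i}" using assms by auto
    then show ?thesis by (simp add: oprob_def outcome_at_def)
  qed
  ultimately show ?thesis by (simp add: sum.reindex)
qed

text \<open>Without this bound the suprema acc_prob and rej_prob would be junk values.\<close>
lemma reach_le_1:
  assumes single: "\<And>q a c. (\<forall>i. \<not> weighed V q a c i) \<or> (\<exists>i. \<forall>j. weighed V q a c j \<longleftrightarrow> j = i)"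
  shows "reach V S P w n cf \<le> 1"
proof (induction n arbitrary: cf)
  case 0
  then show ?case by (cases cf) auto
next
  case (Suc n)
  obtain q p R h where cf: "cf = (q, p, R, h)" by (cases cf)
  let ?a = "tape_at w p" and ?c = "P w h" and ?g = "\<lambda>oc. reach V S P w n (succ_conf V P w cf oc)"
  have "(\<Sum>oc\<in>outs V q ?a ?c. oprob V q ?a ?c R oc * ?g oc) \<le> 1"
    using single[of q ?a ?c]
  proof
    assume "\<forall>i. \<not> weighed V q ?a ?c i"
    then show ?thesis using Suc.IH by (simp add: sum_outs_unweighed)
  next
    assume "\<exists>i. \<forall>j. weighed V q ?a ?c j \<longleftrightarrow> j = i"
    then obtain i where i: "\<And>j. weighed V q ?a ?c j \<longleftrightarrow> j = i" by blast
    let ?D = "\<Sum>j<v_rdim V i. \<bar>R i j\<bar>"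
    have "(\<Sum>u<v_rdim V i. \<bar>R i u\<bar> / ?D * ?g (outcome_at i u)) \<le> (\<Sum>u<v_rdim V i. \<bar>R i u\<bar> / ?D)"
      by (rule sum_mono) (rule mult_left_le[OF Suc.IH], simp)
    also have "\<dots> \<le> 1" by (cases "?D = 0") (simp_all add: sum_divide_distrib[symmetric])
    finally show ?thesis by (simp add: sum_outs_single_weighed[OF i])
  qed
  then show ?case unfolding cf reach_Suc by simp
qed

definition halting_set :: "'a verifier \<Rightarrow> nat set \<Rightarrow> bool" where
  "halting_set V S \<longleftrightarrow> S = v_acc V \<or> S = v_rej V"

lemma halting_set_acc: "halting_set V (v_acc V)" and halting_set_rej: "halting_set V (v_rej V)"
  by (simp_all add: halting_set_def)

text \<open>A step that, as far as halting probabilities are concerned, leads from c to c' with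
  certainty.\<close>
definition det_step :: "'a verifier \<Rightarrow> 'a prover \<Rightarrow> 'a list \<Rightarrow> vconf \<Rightarrow> vconf \<Rightarrow> bool" where
  "det_step V P w c c' \<longleftrightarrow> fst c \<notin> v_acc V \<union> v_rej V \<and>
     (\<forall>S m. halting_set V S \<longrightarrow> reach V S P w (Suc m) c = reach V S P w m c')"

lemma det_step_unweighed:
  assumes "q \<notin> v_acc V \<union> v_rej V" "\<And>i. \<not> weighed V q (tape_at w p) (P w h) i"
  shows "det_step V P w (q, p, R, h) (succ_conf V P w (q, p, R, h) (\<lambda>_. 0))"
  using assms unfolding det_step_def halting_set_def
  by (auto simp: reach_Suc sum_outs_unweighed simp del: reach.simps)

inductive det_path :: "'a verifier \<Rightarrow> 'a prover \<Rightarrow> 'a list \<Rightarrow> nat \<Rightarrow> vconf \<Rightarrow> vconf \<Rightarrow> bool"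
  for V P w where
  det_path_refl: "det_path V P w 0 c c"
| det_path_step: "det_step V P w c c1 \<Longrightarrow> det_path V P w n c1 c2 \<Longrightarrow> det_path V P w (Suc n) c c2"

lemma det_path_trans:
  "det_path V P w n c1 c2 \<Longrightarrow> det_path V P w m c2 c3 \<Longrightarrow> det_path V P w (n + m) c1 c3"
  by (induction rule: det_path.induct) (auto intro: det_path.intros)

lemma det_path_single: "det_step V P w c c' \<Longrightarrow> det_path V P w 1 c c'"
  using det_path_step[OF _ det_path_refl] by simp

lemma det_path_reach:
  "det_path V P w n c c' \<Longrightarrow> halting_set V S \<Longrightarrow> reach V S P w (m + n) c = reach V S P w m c'"
proof (induction arbitrary: m rule: det_path.induct)
  case (det_path_refl c)
  then show ?case by simp
next
  case (det_path_step c c1 n c2)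
  have "reach V S P w (m + Suc n) c = reach V S P w (m + n) c1"
    using det_path_step.hyps(1) det_path_step.prems unfolding det_step_def by simp
  then show ?case using det_path_step.IH det_path_step.prems by simp
qed

lemma det_path_reach_ge:
  assumes "det_path V P w n c c'" "halting_set V S" "reach V S P w m c' \<ge> r"
  shows "\<exists>m. reach V S P w m c \<ge> r"
  using det_path_reach[OF assms(1,2), of m] assms(3) by metis

lemma reach_0_running: "fst c \<notin> v_acc V \<union> v_rej V \<Longrightarrow> halting_set V S \<Longrightarrow> reach V S P w 0 c = 0"
  by (cases c) (auto simp: halting_set_def)

lemma det_path_reach_before:
  "det_path V P w n c c' \<Longrightarrow> halting_set V S \<Longrightarrow> k < n \<Longrightarrow> reach V S P w k c = 0"
proof (induction arbitrary: k rule: det_path.induct)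
  case (det_path_refl c)
  then show ?case by simp
next
  case (det_path_step c c1 n c2)
  show ?case
  proof (cases k)
    case 0
    then show ?thesis using det_path_step reach_0_running unfolding det_step_def by blast
  next
    case (Suc k')
    then have "reach V S P w k c = reach V S P w k' c1"
      using det_path_step.hyps(1) det_path_step.prems unfolding det_step_def by blast
    then show ?thesis using det_path_step.IH det_path_step.prems Suc by simp
  qed
qed

lemma det_path_accept:
  assumes path: "det_path V P w n (start V) c" and running: "fst c \<notin> v_acc V \<union> v_rej V"
    and acc: "\<And>m. reach V (v_acc V) P w (Suc m) c = 1"
    and rej: "\<And>m. reach V (v_rej V) P w (Suc m) c = 0"
  shows "acc_prob V P w = 1" "exp_time_le V P w (real (Suc n))"
proof -
  have reach_start: "reach V S P w k (start V) = (if n < k then reach V S P w (k - n) c else 0)"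
    if S: "halting_set V S" for S k
  proof (cases "n < k")
    case True
    then show ?thesis using det_path_reach[OF path S, of "k - n"] by simp
  next
    case False
    then show ?thesis
      using det_path_reach[OF path S, of 0] reach_0_running[OF running S]
        det_path_reach_before[OF path S, of k]
      by (cases "k = n") auto
  qed
  have acc_start: "reach V (v_acc V) P w k (start V) = (if n < k then 1 else 0)" for k
    using reach_start[of "v_acc V" k] acc[of "k - Suc n"]
    by (cases "n < k") (simp_all add: halting_set_def Suc_diff_Suc)
  have rej_start: "reach V (v_rej V) P w k (start V) = 0" for k
    using reach_start[of "v_rej V" k] rej[of "k - Suc n"]
    by (cases "n < k") (simp_all add: halting_set_def Suc_diff_Suc)
  show "acc_prob V P w = 1"
    unfolding acc_prob_def acc_start
  proof (rule antisym)
    show "(SUP k. if n < k then 1 else 0 :: real) \<le> 1"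
      by (rule cSUP_least) auto
    have "bdd_above (range (\<lambda>k. if n < k then 1 else 0 :: real))"
      by (rule bdd_aboveI[of _ 1]) auto
    then show "1 \<le> (SUP k. if n < k then 1 else 0 :: real)"
      using cSUP_upper[of "Suc n" UNIV "\<lambda>k. if n < k then 1 else 0 :: real"] by simp
  qed
  let ?f = "\<lambda>k. 1 - (reach V (v_acc V) P w k (start V) + reach V (v_rej V) P w k (start V))"
  have f: "?f k = (if k < Suc n then 1 else 0)" for k
    by (simp add: acc_start rej_start)
  have "summable ?f" by (rule summable_finite[of "{..<Suc n}"]) (simp_all add: f)
  moreover have "suminf ?f = (\<Sum>k<Suc n. ?f k)" by (rule suminf_finite) (simp_all add: f)
  ultimately show "exp_time_le V P w (real (Suc n))"
    unfolding exp_time_le_def Let_def by (simp add: f)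
qed

lemma exp_time_le_mono: "exp_time_le V P w B \<Longrightarrow> B \<le> B' \<Longrightarrow> exp_time_le V P w B'"
  unfolding exp_time_le_def Let_def by auto

definition tm_state :: "'a dtm \<Rightarrow> 'a list \<Rightarrow> nat \<Rightarrow> nat" where
  "tm_state M w t = fst (tm_conf M w t)"

definition tm_tape :: "'a dtm \<Rightarrow> 'a list \<Rightarrow> nat \<Rightarrow> int \<Rightarrow> nat" where
  "tm_tape M w t = fst (snd (tm_conf M w t))"

definition tm_head :: "'a dtm \<Rightarrow> 'a list \<Rightarrow> nat \<Rightarrow> int" where
  "tm_head M w t = snd (snd (tm_conf M w t))"

lemma tm_conf_eq: "tm_conf M w t = (tm_state M w t, tm_tape M w t, tm_head M w t)"
  by (simp add: tm_state_def tm_tape_def tm_head_def)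

lemma tm_conf_Suc: "tm_conf M w (Suc t) = tm_step M (tm_conf M w t)"
  by (simp add: tm_conf_def)

lemma tm_init_vals:
  "tm_state M w 0 = tm_q0 M" "tm_head M w 0 = 0"
  "tm_tape M w 0 = (\<lambda>i. if 0 \<le> i \<and> i < int (length w) then tm_enc M (w ! nat i) else 0)"
  by (simp_all add: tm_state_def tm_head_def tm_tape_def tm_conf_def tm_init_def)

lemma tm_conf_Suc_halted:
  "tm_state M w t \<in> {tm_acc M, tm_rej M} \<Longrightarrow> tm_conf M w (Suc t) = tm_conf M w t"
  by (subst tm_conf_Suc, subst (1) tm_conf_eq) (auto simp: tm_step_def tm_conf_eq)

lemma tm_conf_Suc_running:
  assumes "tm_state M w t \<notin> {tm_acc M, tm_rej M}"
    and "tm_delta M (tm_state M w t) (tm_tape M w t (tm_head M w t)) = (q', s', d)"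
  shows "tm_state M w (Suc t) = q'" "tm_tape M w (Suc t) = (tm_tape M w t)(tm_head M w t := s')"
    "tm_head M w (Suc t) = tm_head M w t + d"
proof -
  have "tm_conf M w (Suc t) = (q', (tm_tape M w t)(tm_head M w t := s'), tm_head M w t + d)"
    using assms by (simp add: tm_conf_Suc tm_conf_eq[of M w t] tm_step_def)
  then show "tm_state M w (Suc t) = q'" "tm_tape M w (Suc t) = (tm_tape M w t)(tm_head M w t := s')"
    "tm_head M w (Suc t) = tm_head M w t + d"
    by (simp_all add: tm_state_def tm_tape_def tm_head_def)
qed

lemma tm_conf_halted_stays:
  assumes "tm_state M w t \<in> {tm_acc M, tm_rej M}" "t \<le> t'"
  shows "tm_conf M w t' = tm_conf M w t"
  using assms(2)
proof (induction t' rule: dec_induct)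
  case base
  then show ?case by simp
next
  case (step n)
  then have "tm_state M w n = tm_state M w t" by (simp add: tm_state_def)
  then show ?case using step assms(1) tm_conf_Suc_halted[of M w n] by simp
qed

lemma tm_time_facts:
  assumes "tm_decides M L"
  shows "tm_state M w (tm_time M w) \<in> {tm_acc M, tm_rej M}"
    "\<forall>t < tm_time M w. tm_state M w t \<notin> {tm_acc M, tm_rej M}"
    "tm_state M w (tm_time M w) = tm_acc M \<longleftrightarrow> w \<in> L"
proof -
  have halted_iff: "tm_halted M w n \<longleftrightarrow> tm_state M w n \<in> {tm_acc M, tm_rej M}" for n
    by (simp add: tm_halted_def tm_state_def)
  obtain n where n: "tm_halted M w n" "fst (tm_conf M w n) = tm_acc M \<longleftrightarrow> w \<in> L"
    using assms unfolding tm_decides_def by blast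
  have "tm_halted M w (tm_time M w)" unfolding tm_time_def by (rule LeastI[of _ n]) (rule n(1))
  then show halted: "tm_state M w (tm_time M w) \<in> {tm_acc M, tm_rej M}" by (simp add: halted_iff)
  show "\<forall>t < tm_time M w. tm_state M w t \<notin> {tm_acc M, tm_rej M}"
    unfolding tm_time_def using not_less_Least halted_iff by blast
  have "tm_time M w \<le> n" unfolding tm_time_def by (rule Least_le) (rule n(1))
  then have "tm_conf M w n = tm_conf M w (tm_time M w)" by (rule tm_conf_halted_stays[OF halted])
  then show "tm_state M w (tm_time M w) = tm_acc M \<longleftrightarrow> w \<in> L" using n(2) by (simp add: tm_state_def)
qed

lemma tm_tape_support:
  assumes head: "\<And>t. \<bar>tm_head M w t\<bar> \<le> A" and "tm_tape M w t j \<noteq> 0"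
  shows "- A \<le> j \<and> j \<le> A + int (length w)"
  using assms(2)
proof (induction t)
  case 0
  have "0 \<le> A" using head[of 0] by simp
  moreover have "0 \<le> j \<and> j < int (length w)" using 0 by (auto simp: tm_init_vals split: if_splits)
  ultimately show ?case by linarith
next
  case (Suc t)
  show ?case
  proof (cases "tm_state M w t \<in> {tm_acc M, tm_rej M}")
    case True
    then show ?thesis using Suc tm_conf_Suc_halted[OF True] by (simp add: tm_state_def tm_tape_def)
  next
    case running: False
    obtain q' s' d where delta: "tm_delta M (tm_state M w t) (tm_tape M w t (tm_head M w t)) = (q', s', d)"
      by (metis prod_cases3)
    show ?thesis
    proof (cases "j = tm_head M w t")
      case True
      then show ?thesis using head[of t] by auto
    next
      case False
      then have "tm_tape M w t j \<noteq> 0" using Suc.prems tm_conf_Suc_running(2)[OF running delta] by simp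
      then show ?thesis using Suc.IH by blast
    qed
  qed
qed

locale wf_tm = fixes M :: "'a dtm" assumes wf_M: "wf_dtm M"
begin

lemma tm_enc_lt: "tm_enc M x < tm_nsym M" and tm_enc_pos: "0 < tm_enc M x"
  using wf_M unfolding wf_dtm_def by blast+

lemma tm_q0_lt: "tm_q0 M < tm_nst M"
  using wf_M unfolding wf_dtm_def by blast

lemma tm_acc_neq_rej: "tm_acc M \<noteq> tm_rej M"
  using wf_M unfolding wf_dtm_def by blast

lemma tm_delta_bounds:
  assumes "q < tm_nst M" "s < tm_nsym M" "tm_delta M q s = (q', s', d)"
  shows "q' < tm_nst M" "s' < tm_nsym M" "d \<in> {-1, 0, 1}"
proof -
  have "\<forall>q < tm_nst M. \<forall>s < tm_nsym M. case tm_delta M q s of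
      (q', s', d) \<Rightarrow> q' < tm_nst M \<and> s' < tm_nsym M \<and> d \<in> {-1, 0, 1}"
    using wf_M unfolding wf_dtm_def by (elim conjE) assumption
  from this[rule_format, OF assms(1,2)] assms(3)
  show "q' < tm_nst M" "s' < tm_nsym M" "d \<in> {-1, 0, 1}" by simp_all
qed

lemma tm_nsym_ge_2: "2 \<le> tm_nsym M"
  using tm_enc_lt[of undefined] tm_enc_pos[of undefined] by linarith

lemma tm_state_lt: "tm_state M w t < tm_nst M" and tm_tape_lt: "tm_tape M w t j < tm_nsym M"
proof -
  have "tm_state M w t < tm_nst M \<and> (\<forall>j. tm_tape M w t j < tm_nsym M)"
  proof (induction t)
    case 0
    then show ?case using tm_q0_lt tm_enc_lt tm_nsym_ge_2 by (auto simp: tm_init_vals)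
  next
    case (Suc t)
    show ?case
    proof (cases "tm_state M w t \<in> {tm_acc M, tm_rej M}")
      case True
      then show ?thesis using Suc tm_conf_Suc_halted[OF True] by (simp add: tm_state_def tm_tape_def)
    next
      case False
      obtain q' s' d where delta: "tm_delta M (tm_state M w t) (tm_tape M w t (tm_head M w t)) = (q', s', d)"
        by (metis prod_cases3)
      from tm_delta_bounds[OF _ _ delta] Suc tm_conf_Suc_running[OF False delta] show ?thesis by auto
    qed
  qed
  then show "tm_state M w t < tm_nst M" "tm_tape M w t j < tm_nsym M" by auto
qed

end

section \<open>Tape halves as base-b numbers\<close>

definition left_num :: "int \<Rightarrow> (int \<Rightarrow> nat) \<Rightarrow> int \<Rightarrow> nat \<Rightarrow> int" where
  "left_num b T h m = (\<Sum>i<m. int (T (h - 1 - int i)) * b ^ i)"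

definition right_num :: "int \<Rightarrow> (int \<Rightarrow> nat) \<Rightarrow> int \<Rightarrow> nat \<Rightarrow> int" where
  "right_num b T h m = (\<Sum>i<m. int (T (h + 1 + int i)) * b ^ i)"

lemma left_num_Suc: "left_num b T h (Suc m) = left_num b T h m + int (T (h - 1 - int m)) * b ^ m"
  by (simp add: left_num_def)

lemma right_num_Suc: "right_num b T h (Suc m) = right_num b T h m + int (T (h + 1 + int m)) * b ^ m"
  by (simp add: right_num_def)

lemma left_num_Suc_shift: "left_num b T h (Suc m) = int (T (h - 1)) + b * left_num b T (h - 1) m"
  unfolding left_num_def sum.lessThan_Suc_shift by (simp add: sum_distrib_left algebra_simps)

lemma right_num_Suc_shift: "right_num b T h (Suc m) = int (T (h + 1)) + b * right_num b T (h + 1) m"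
  unfolding right_num_def sum.lessThan_Suc_shift by (simp add: sum_distrib_left algebra_simps)

lemma left_num_cong:
  "(\<And>i. i < m \<Longrightarrow> T (h - 1 - int i) = T' (h - 1 - int i)) \<Longrightarrow> left_num b T h m = left_num b T' h m"
  unfolding left_num_def by (rule sum.cong) auto

lemma right_num_cong:
  "(\<And>i. i < m \<Longrightarrow> T (h + 1 + int i) = T' (h + 1 + int i)) \<Longrightarrow> right_num b T h m = right_num b T' h m"
  unfolding right_num_def by (rule sum.cong) auto

lemma left_num_write: "left_num b (T(h := s')) h m = left_num b T h m"
  by (rule left_num_cong) auto

lemma right_num_write: "right_num b (T(h := s')) h m = right_num b T h m"
  by (rule right_num_cong) auto

lemma right_num_blank_ext:
  assumes "\<And>i. m \<le> i \<Longrightarrow> i < m' \<Longrightarrow> T (h + 1 + int i) = 0" "m \<le> m'"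
  shows "right_num b T h m' = right_num b T h m"
  using assms
proof (induction m')
  case 0
  then show ?case by simp
next
  case (Suc m')
  then show ?case by (cases "m = Suc m'") (simp_all add: right_num_Suc)
qed

text \<open>Writing s' and moving the head changes both numbers of a window of width W
  by one digit shift, provided the cell leaving or entering the window is blank.\<close>

lemma left_num_move_right:
  assumes "T (h - int (Suc m)) = 0"
  shows "left_num b (T(h := s')) (h + 1) (Suc m) = int s' + b * left_num b T h (Suc m)"
proof -
  have "left_num b (T(h := s')) (h + 1) (Suc m) = int s' + b * left_num b (T(h := s')) h m"
    by (simp add: left_num_Suc_shift)
  also have "left_num b (T(h := s')) h m = left_num b T h m" by (rule left_num_write)
  also have "left_num b T h m = left_num b T h (Suc m)" using assms by (simp add: left_num_Suc algebra_simps)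
  finally show ?thesis .
qed

lemma right_num_move_right:
  assumes "T (h + 1 + int W) = 0"
  shows "int (T (h + 1)) + b * right_num b (T(h := s')) (h + 1) W = right_num b T h W"
proof -
  have "right_num b (T(h := s')) (h + 1) W = right_num b T (h + 1) W" by (rule right_num_cong) auto
  moreover have "right_num b T h (Suc W) = int (T (h + 1)) + b * right_num b T (h + 1) W"
    by (rule right_num_Suc_shift)
  moreover have "right_num b T h (Suc W) = right_num b T h W" using assms by (simp add: right_num_Suc)
  ultimately show ?thesis by simp
qed

lemma left_num_move_left:
  assumes "T (h - 1 - int W) = 0"
  shows "left_num b T h W = int (T (h - 1)) + b * left_num b (T(h := s')) (h - 1) W"
proof -
  have "left_num b (T(h := s')) (h - 1) W = left_num b T (h - 1) W" by (rule left_num_cong) auto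
  moreover have "left_num b T h (Suc W) = int (T (h - 1)) + b * left_num b T (h - 1) W"
    by (rule left_num_Suc_shift)
  moreover have "left_num b T h (Suc W) = left_num b T h W" using assms by (simp add: left_num_Suc)
  ultimately show ?thesis by simp
qed

lemma right_num_move_left:
  assumes "T (h + int (Suc m)) = 0"
  shows "right_num b (T(h := s')) (h - 1) (Suc m) = int s' + b * right_num b T h (Suc m)"
proof -
  have "right_num b (T(h := s')) (h - 1) (Suc m) = int s' + b * right_num b (T(h := s')) h m"
    by (simp add: right_num_Suc_shift)
  also have "right_num b (T(h := s')) h m = right_num b T h m" by (rule right_num_write)
  also have "right_num b T h m = right_num b T h (Suc m)" using assms
    by (simp add: right_num_Suc algebra_simps)
  finally show ?thesis .
qed

fun horner :: "int \<Rightarrow> (nat \<Rightarrow> int) \<Rightarrow> nat \<Rightarrow> int" where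
  "horner b D 0 = 0"
| "horner b D (Suc m) = b * horner b D m + D m"

lemma horner_eq_sum: "horner b D m = (\<Sum>i<m. D (m - 1 - i) * b ^ i)"
proof (induction m)
  case 0
  then show ?case by simp
next
  case (Suc m)
  have "(\<Sum>i<Suc m. D (Suc m - 1 - i) * b ^ i) = D m + (\<Sum>i<m. D (m - 1 - i) * b ^ Suc i)"
    unfolding sum.lessThan_Suc_shift by simp
  also have "\<dots> = D m + b * (\<Sum>i<m. D (m - 1 - i) * b ^ i)"
    by (simp add: sum_distrib_left algebra_simps)
  finally show ?case using Suc by simp
qed

lemma horner_left_num: "horner b (\<lambda>j. int (T (h - int W + int j))) W = left_num b T h W"
  unfolding horner_eq_sum left_num_def by (rule sum.cong) (auto simp: of_nat_diff algebra_simps)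

lemma horner_right_num: "horner b (\<lambda>j. int (T (h + int W - int j))) W = right_num b T h W"
  unfolding horner_eq_sum right_num_def by (rule sum.cong) (auto simp: of_nat_diff algebra_simps)

lemma digit_unique:
  fixes a a' x x' :: int
  assumes "0 \<le> a" "a < b" "0 \<le> a'" "a' < b" "a + b * x = a' + b * x'"
  shows "a = a' \<and> x = x'"
proof -
  have "a = (a + b * x) mod b" "a' = (a' + b * x') mod b" using assms(1-4) by simp_all
  then have "a = a'" using assms(5) by simp
  then show ?thesis using assms by simp
qed

section \<open>Integer affine maps on affine registers\<close>

text \<open>An integer vector (x1, x2, x3, x4) is stored in a five-state affine register as
  (1 - x1 - x2 - x3 - x4, x1, x2, x3, x4). An integer affine map x \<mapsto> F x + G of the four
  coordinates then acts as the affine operator aff_mat F G: row 0 repairs the column sums.\<close>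

definition aff_vec :: "(nat \<Rightarrow> int) \<Rightarrow> nat \<Rightarrow> real" where
  "aff_vec x j =
     (if j = 0 then 1 - real_of_int (x 1 + x 2 + x 3 + x 4) else if j \<le> 4 then real_of_int (x j) else 0)"

definition aff_int_mat :: "(nat \<Rightarrow> nat \<Rightarrow> int) \<Rightarrow> (nat \<Rightarrow> int) \<Rightarrow> nat \<Rightarrow> nat \<Rightarrow> int" where
  "aff_int_mat F G r k =
     (if k < 5 \<and> 1 \<le> r \<and> r \<le> 4 then G r + (if k = 0 then 0 else F r k)
      else if k < 5 \<and> r = 0 then 1 - (\<Sum>r'\<in>{1..4}. G r' + (if k = 0 then 0 else F r' k))
      else 0)"

definition aff_mat :: "(nat \<Rightarrow> nat \<Rightarrow> int) \<Rightarrow> (nat \<Rightarrow> int) \<Rightarrow> nat \<Rightarrow> nat \<Rightarrow> real" where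
  "aff_mat F G r k = real_of_int (aff_int_mat F G r k)"

definition aff_map :: "(nat \<Rightarrow> nat \<Rightarrow> int) \<Rightarrow> (nat \<Rightarrow> int) \<Rightarrow> (nat \<Rightarrow> int) \<Rightarrow> nat \<Rightarrow> int" where
  "aff_map F G x r = (\<Sum>k\<in>{1..4}. F r k * x k) + G r"

lemma lessThan_5: "{..<5::nat} = {0, 1, 2, 3, 4}"
  by auto

lemma atLeastAtMost_1_4: "{1..4::nat} = {1, 2, 3, 4}"
  by auto

lemma aff_mat_col_sum: "k < 5 \<Longrightarrow> (\<Sum>r<5. aff_mat F G r k) = 1"
  unfolding aff_mat_def aff_int_mat_def lessThan_5 atLeastAtMost_1_4 by simp

lemma aff_mat_rat: "aff_mat F G r k \<in> \<rat>"
  unfolding aff_mat_def by simp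

lemma aff_mat_mult_aff_vec: "(\<lambda>r. \<Sum>k<5. aff_mat F G r k * aff_vec x k) = aff_vec (aff_map F G x)"
proof
  fix r :: nat
  consider "r = 0" | "r = 1" | "r = 2" | "r = 3" | "r = 4" | "r > 4" by linarith
  then show "(\<Sum>k<5. aff_mat F G r k * aff_vec x k) = aff_vec (aff_map F G x) r"
    unfolding aff_mat_def aff_int_mat_def lessThan_5 atLeastAtMost_1_4 aff_vec_def aff_map_def
    by cases (simp_all add: algebra_simps)
qed

lemma aff_vec_cong: "(\<And>j. 1 \<le> j \<Longrightarrow> j \<le> 4 \<Longrightarrow> x j = y j) \<Longrightarrow> aff_vec x = aff_vec y"
  unfolding aff_vec_def by (rule ext) (simp add: numeral_eq_Suc)

lemma aff_vec_cong4: "x 1 = y 1 \<Longrightarrow> x 2 = y 2 \<Longrightarrow> x 3 = y 3 \<Longrightarrow> x 4 = y 4 \<Longrightarrow> aff_vec x = aff_vec y"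
proof (rule aff_vec_cong)
  fix j :: nat
  assume "1 \<le> j" "j \<le> 4" "x 1 = y 1" "x 2 = y 2" "x 3 = y 3" "x 4 = y 4"
  moreover have "j = 1 \<or> j = 2 \<or> j = 3 \<or> j = 4" using \<open>1 \<le> j\<close> \<open>j \<le> 4\<close> by linarith
  ultimately show "x j = y j" by auto
qed

lemma aff_vec_zero: "aff_vec (\<lambda>_. 0) = (\<lambda>j. if j = 0 then 1 else 0)"
  by (rule ext) (simp add: aff_vec_def)

definition id_mat :: "nat \<Rightarrow> nat \<Rightarrow> int" where
  "id_mat r k = (if r = k then 1 else 0)"

lemma aff_map_id: "aff_vec (aff_map id_mat (\<lambda>_. 0) x) = aff_vec x"
  unfolding aff_map_def atLeastAtMost_1_4 by (rule aff_vec_cong4) (auto simp: id_mat_def)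

definition shift_mat :: "int \<Rightarrow> nat \<Rightarrow> nat \<Rightarrow> nat \<Rightarrow> int" where
  "shift_mat b i r k = (if r = k then (if r = i then b else 1) else 0)"

definition shift_off :: "nat \<Rightarrow> int \<Rightarrow> nat \<Rightarrow> int" where
  "shift_off i c r = (if r = i then c else 0)"

definition shift_in :: "int \<Rightarrow> nat \<Rightarrow> int \<Rightarrow> (nat \<Rightarrow> int) \<Rightarrow> nat \<Rightarrow> int" where
  "shift_in b i c x = x(i := b * x i + c)"

lemma aff_map_shift:
  "1 \<le> i \<Longrightarrow> i \<le> 4 \<Longrightarrow> aff_vec (aff_map (shift_mat b i) (shift_off i c) x) = aff_vec (shift_in b i c x)"
  unfolding aff_map_def atLeastAtMost_1_4
  by (rule aff_vec_cong4) (auto simp: shift_mat_def shift_off_def shift_in_def)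

definition test_vec :: "int \<Rightarrow> int \<Rightarrow> nat \<Rightarrow> int" where
  "test_vec e1 e2 r =
     (if r = 1 then e1 else if r = 2 then -e1 else if r = 3 then e2 else if r = 4 then -e2 else 0)"

definition test_mat :: "int \<Rightarrow> int \<Rightarrow> int \<Rightarrow> int \<Rightarrow> nat \<Rightarrow> nat \<Rightarrow> int" where
  "test_mat a1 b1 a2 b2 r k =
     (if r = 1 then (if k = 1 then a1 else if k = 3 then b1 else 0)
      else if r = 2 then (if k = 1 then -a1 else if k = 3 then -b1 else 0)
      else if r = 3 then (if k = 2 then a2 else if k = 4 then b2 else 0)
      else if r = 4 then (if k = 2 then -a2 else if k = 4 then -b2 else 0) else 0)"

definition test_off :: "int \<Rightarrow> int \<Rightarrow> nat \<Rightarrow> int" where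
  "test_off g1 g2 = test_vec g1 g2"

lemma aff_map_test:
  "aff_vec (aff_map (test_mat a1 b1 a2 b2) (test_off g1 g2) x) =
   aff_vec (test_vec (a1 * x 1 + b1 * x 3 + g1) (a2 * x 2 + b2 * x 4 + g2))"
  unfolding aff_map_def atLeastAtMost_1_4
  by (rule aff_vec_cong) (auto simp: test_mat_def test_off_def test_vec_def)

lemma aff_vec_test_vec:
  "aff_vec (test_vec e1 e2) j =
     (if j = 0 then 1 else if j = 1 then of_int e1 else if j = 2 then - of_int e1
      else if j = 3 then of_int e2 else if j = 4 then - of_int e2 else 0)"
  by (auto simp: aff_vec_def test_vec_def)

lemma aff_vec_test_vec_abs_sum:
  "(\<Sum>j<5. \<bar>aff_vec (test_vec e1 e2) j\<bar>) = 1 + 2 * \<bar>of_int e1\<bar> + 2 * \<bar>of_int e2\<bar>"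
  unfolding lessThan_5 by (simp add: aff_vec_test_vec)

section \<open>The simulating verifier\<close>

lemma horner_sum_inj:
  fixes xs ys :: "nat list"
  assumes "length xs = length ys" "\<forall>x\<in>set xs. x < N" "\<forall>y\<in>set ys. y < N"
    and "horner_sum (\<lambda>x. x) N xs = horner_sum (\<lambda>x. x) N ys"
  shows "xs = ys"
  using assms
proof (induction xs ys rule: list_induct2)
  case Nil
  then show ?case by simp
next
  case (Cons x xs y ys)
  then have "x < N" "y < N"
    and eq: "x + N * horner_sum (\<lambda>x. x) N xs = y + N * horner_sum (\<lambda>x. x) N ys" by simp_all
  then have "x = y" by (metis mod_mult_self2 mod_less)
  moreover have "horner_sum (\<lambda>x. x) N xs = horner_sum (\<lambda>x. x) N ys" using eq \<open>x = y\<close> \<open>x < N\<close> by simp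
  ultimately show ?case using Cons by simp
qed

lemma horner_sum_less:
  fixes xs :: "nat list"
  assumes "\<forall>x\<in>set xs. x < N"
  shows "horner_sum (\<lambda>x. x) N xs < N ^ length xs"
  using assms
proof (induction xs)
  case Nil
  then show ?case by simp
next
  case (Cons x xs)
  then have "x < N" "horner_sum (\<lambda>x. x) N xs + 1 \<le> N ^ length xs" by auto
  then have "x + N * horner_sum (\<lambda>x. x) N xs < N * (horner_sum (\<lambda>x. x) N xs + 1)" by simp
  also have "\<dots> \<le> N * N ^ length xs"
    using \<open>horner_sum (\<lambda>x. x) N xs + 1 \<le> N ^ length xs\<close> by (rule mult_le_mono2)
  finally show ?case by simp
qed

text \<open>Ctx q sp d par st describes a round of the simulation: q is the machine state of the
  configuration being checked, sp and d (coded by dir_code) are the symbol written and the head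
  move of the step that produced it, par is the register holding the previous configuration,
  and st is the scanned symbol announced by the prover.\<close>
datatype ctx = Ctx nat nat nat nat nat

text \<open>Stream b r rw x is the r-th sweep streaming the left (b = False) or right (b = True) half
  of the tape window, rw telling whether the head is returning to the left end-marker.\<close>
datatype vst = Seek | Load nat | Stream bool nat bool ctx | Read ctx | Prepare ctx | Check ctx
  | Accept | Reject

fun ctx_list :: "ctx \<Rightarrow> nat list" where
  "ctx_list (Ctx q sp d par st) = [q, sp, d, par, st]"

fun vst_list :: "vst \<Rightarrow> nat list" where
  "vst_list Seek = [0, 0, 0, 0, 0, 0, 0, 0, 0]"
| "vst_list (Load pv) = [1, pv, 0, 0, 0, 0, 0, 0, 0]"
| "vst_list (Stream b r rw x) = [2, of_bool b, r, of_bool rw] @ ctx_list x"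
| "vst_list (Read x) = [3, 0, 0, 0] @ ctx_list x"
| "vst_list (Prepare x) = [4, 0, 0, 0] @ ctx_list x"
| "vst_list (Check x) = [5, 0, 0, 0] @ ctx_list x"
| "vst_list Accept = [6, 0, 0, 0, 0, 0, 0, 0, 0]"
| "vst_list Reject = [7, 0, 0, 0, 0, 0, 0, 0, 0]"

lemma length_vst_list: "length (vst_list s) = 9"
proof -
  have "length (ctx_list x) = 5" for x by (cases x) simp
  then show ?thesis by (cases s) simp_all
qed

lemma vst_list_inj: "vst_list s = vst_list s' \<Longrightarrow> s = s'"
proof -
  have ctx_list_inj: "ctx_list x = ctx_list y \<Longrightarrow> x = y" for x y
    by (cases x; cases y) auto
  show "vst_list s = vst_list s' \<Longrightarrow> s = s'"
    by (cases s; cases s') (auto dest: ctx_list_inj simp: of_bool_def split: if_splits)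
qed

definition dir_code :: "int \<Rightarrow> nat" where
  "dir_code d = (if d = 1 then 1 else if d = -1 then 2 else 0)"

text \<open>The register holding the previous configuration (X1, X2) receives the streamed halves in
  coordinates 3 and 4, the other register in coordinates 1 and 2, where they serve as the
  previous configuration of the next round.\<close>
definition stream_coord :: "bool \<Rightarrow> nat" where
  "stream_coord b = (if b then 4 else 3)"

definition copy_coord :: "bool \<Rightarrow> nat" where
  "copy_coord b = (if b then 2 else 1)"

definition id_aff :: "(nat \<Rightarrow> nat \<Rightarrow> int) \<times> (nat \<Rightarrow> int)" where
  "id_aff = (id_mat, \<lambda>_. 0)"

locale sim = wf_tm M for M :: "'a dtm" +
  fixes K :: nat
  assumes K_pos: "0 < K"
begin

definition sym_base :: int where
  "sym_base = int (tm_nsym M)"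

definition code_base :: nat where
  "code_base = tm_nst M + tm_nsym M + K + 8"

definition valid_vst :: "vst \<Rightarrow> bool" where
  "valid_vst s \<longleftrightarrow> (\<forall>x\<in>set (vst_list s). x < code_base)"

definition enc_vst :: "vst \<Rightarrow> nat" where
  "enc_vst s = horner_sum (\<lambda>x. x) code_base (vst_list s)"

definition dec_vst :: "nat \<Rightarrow> vst" where
  "dec_vst q = (if \<exists>s. valid_vst s \<and> enc_vst s = q then THE s. valid_vst s \<and> enc_vst s = q else Reject)"

lemma enc_vst_inj: "valid_vst s \<Longrightarrow> valid_vst s' \<Longrightarrow> enc_vst s = enc_vst s' \<Longrightarrow> s = s'"
  unfolding valid_vst_def enc_vst_def by (metis horner_sum_inj length_vst_list vst_list_inj)

lemma dec_enc_vst: "valid_vst s \<Longrightarrow> dec_vst (enc_vst s) = s"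
  unfolding dec_vst_def using enc_vst_inj by (auto intro!: the_equality)

lemma enc_vst_less: "valid_vst s \<Longrightarrow> enc_vst s < code_base ^ 9"
  unfolding valid_vst_def enc_vst_def using horner_sum_less length_vst_list by metis

lemma valid_vst_simple: "valid_vst Seek" "valid_vst Accept" "valid_vst Reject"
  by (auto simp: valid_vst_def code_base_def)

lemma enc_Accept_neq_Reject: "enc_vst Accept \<noteq> enc_vst Reject"
  using enc_vst_inj valid_vst_simple by blast

definition test_aff :: "nat \<Rightarrow> nat \<Rightarrow> nat \<Rightarrow> (nat \<Rightarrow> nat \<Rightarrow> int) \<times> (nat \<Rightarrow> int)" where
  "test_aff sp d st =
     (if d = 0 then (test_mat (-1) 1 (-1) 1, test_off 0 0)
      else if d = 1 then (test_mat (- sym_base) 1 (-1) sym_base, test_off (- int sp) (int st))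
      else (test_mat 1 (- sym_base) (- sym_base) 1, test_off (- int st) (- int sp)))"

fun sim_trans :: "vst \<Rightarrow> 'a tape_sym \<Rightarrow> nat \<Rightarrow> (nat \<Rightarrow> nat) \<Rightarrow> vst \<times> int" where
  "sim_trans Seek a c oc = (if a = REnd then (Load 0, -1) else (Seek, 1))"
| "sim_trans (Load pv) a c oc =
     (case a of
        LEnd \<Rightarrow> (Stream False 0 False (Ctx (tm_q0 M) pv 0 0 0), 0)
      | Sym x \<Rightarrow> (Load (tm_enc M x), -1)
      | REnd \<Rightarrow> (Reject, 0))"
| "sim_trans (Stream b r rw x) a c oc =
     (if \<not> rw then (if a = REnd then (Stream b r True x, -1) else (Stream b r False x, 1))
      else if a = LEnd then
        (if Suc r < K then (Stream b (Suc r) False x, 0) else if b then (Prepare x, 0) else (Read x, 0))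
      else (Stream b r True x, -1))"
| "sim_trans (Read (Ctx q sp d par st)) a c oc =
     (if c < tm_nsym M \<and> (d = 0 \<longrightarrow> c = sp) then (Stream True 0 False (Ctx q sp d par c), 0)
      else (Reject, 0))"
| "sim_trans (Prepare x) a c oc = (Check x, 0)"
| "sim_trans (Check (Ctx q sp d par st)) a c oc =
     (if oc par \<noteq> 0 then (Reject, 0)
      else if q = tm_acc M then (Accept, 0)
      else if q = tm_rej M then (Reject, 0)
      else (case tm_delta M q st of
              (q', s', d') \<Rightarrow> (Stream False 0 False (Ctx q' s' (dir_code d') (1 - par) 0), 0)))"
| "sim_trans Accept a c oc = (Accept, 0)"
| "sim_trans Reject a c oc = (Reject, 0)"

fun sim_act :: "vst \<Rightarrow> 'a tape_sym \<Rightarrow> nat \<Rightarrow> nat \<Rightarrow> ((nat \<Rightarrow> nat \<Rightarrow> int) \<times> (nat \<Rightarrow> int)) option"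
  where
  "sim_act (Load pv) a c i =
     (case a of
        Sym x \<Rightarrow> Some (if i = 0 then (shift_mat sym_base 2, shift_off 2 (int pv)) else id_aff)
      | _ \<Rightarrow> Some id_aff)"
| "sim_act (Stream b r rw (Ctx q sp d par st)) a c i =
     (if rw \<or> a = REnd then Some id_aff
      else if i = par then Some (shift_mat sym_base (stream_coord b), shift_off (stream_coord b) (int c))
      else Some (shift_mat sym_base (copy_coord b), shift_off (copy_coord b) (int c)))"
| "sim_act (Prepare (Ctx q sp d par st)) a c i = (if i = par then Some (test_aff sp d st) else Some id_aff)"
| "sim_act (Check (Ctx q sp d par st)) a c i = (if i = par then None else Some id_aff)"
| "sim_act Seek a c i = Some id_aff"
| "sim_act (Read x) a c i = Some id_aff"
| "sim_act Accept a c i = Some id_aff"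
| "sim_act Reject a c i = Some id_aff"

definition sim_verifier :: "'a verifier" where
  "sim_verifier =
     \<lparr> v_nst = code_base ^ 9, v_nmsg = tm_nsym M, v_q0 = enc_vst Seek,
       v_acc = {enc_vst Accept}, v_rej = {enc_vst Reject}, v_nreg = 2, v_rdim = (\<lambda>_. 5),
       v_act = (\<lambda>q a c i. map_option (\<lambda>(F, G). aff_mat F G) (sim_act (dec_vst q) a c i)),
       v_trans = (\<lambda>q a c oc. case sim_trans (dec_vst q) a c oc of
         (s', d) \<Rightarrow> if valid_vst s' then (enc_vst s', d) else (enc_vst Reject, 0)) \<rparr>"

lemma sim_verifier_sel:
  "v_nreg sim_verifier = 2" "v_rdim sim_verifier i = 5" "v_nmsg sim_verifier = tm_nsym M"
  "v_acc sim_verifier = {enc_vst Accept}" "v_rej sim_verifier = {enc_vst Reject}"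
  by (simp_all add: sim_verifier_def)

lemma v_trans_sim_verifier:
  "valid_vst s \<Longrightarrow> sim_trans s a c oc = (s', d) \<Longrightarrow> valid_vst s' \<Longrightarrow>
   v_trans sim_verifier (enc_vst s) a c oc = (enc_vst s', d)"
  by (simp add: sim_verifier_def dec_enc_vst)

lemma sim_trans_moves:
  assumes "sim_trans s a c oc = (s', d)"
  shows "d \<in> {-1, 0, 1} \<and> (a = LEnd \<longrightarrow> d \<noteq> -1) \<and> (a = REnd \<longrightarrow> d \<noteq> 1)"
proof (cases s)
  case (Load pv)
  then show ?thesis using assms by (cases a) auto
next
  case (Read x)
  then show ?thesis using assms by (cases x) (auto split: if_splits)
next
  case (Check x)
  then show ?thesis using assms by (cases x) (auto split: if_splits prod.splits)
qed (use assms in \<open>auto split: if_splits\<close>)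

lemma wf_sim_verifier: "wf_verifier sim_verifier"
  unfolding wf_verifier_def
proof (intro conjI allI impI)
  show "v_q0 sim_verifier < v_nst sim_verifier" "v_acc sim_verifier \<subseteq> {..<v_nst sim_verifier}"
    "v_rej sim_verifier \<subseteq> {..<v_nst sim_verifier}" "v_acc sim_verifier \<inter> v_rej sim_verifier = {}"
    using enc_Accept_neq_Reject by (auto simp: sim_verifier_def enc_vst_less valid_vst_simple)
next
  fix i
  show "1 \<le> v_rdim sim_verifier i" by (simp add: sim_verifier_def)
next
  fix q a c i A k
  assume "v_act sim_verifier q a c i = Some A" "k < v_rdim sim_verifier i"
  then show "(\<Sum>r<v_rdim sim_verifier i. A r k) = 1" by (auto simp: sim_verifier_def aff_mat_col_sum)
next
  fix q a c oc
  show "case v_trans sim_verifier q a c oc of (q', d) \<Rightarrow> q' < v_nst sim_verifier \<and> d \<in> {-1, 0, 1} \<and>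
      (a = LEnd \<longrightarrow> d \<noteq> -1) \<and> (a = REnd \<longrightarrow> d \<noteq> 1)"
    using sim_trans_moves
    by (auto simp: sim_verifier_def enc_vst_less valid_vst_simple split: prod.splits)
qed

lemma rational_sim_verifier: "rational_verifier sim_verifier"
  unfolding rational_verifier_def by (auto simp: sim_verifier_def aff_mat_rat)

end

abbreviation hist_ext :: "'a prover \<Rightarrow> 'a list \<Rightarrow> hist \<Rightarrow> hist" where
  "hist_ext P w h \<equiv> h @ [(P w h, \<lambda>_. 0)]"

lemma tape_at_0: "tape_at w 0 = LEnd"
  and tape_at_Sym: "1 \<le> p \<Longrightarrow> p \<le> length w \<Longrightarrow> tape_at w p = Sym (w ! (p - 1))"
  and tape_at_end: "tape_at w (Suc (length w)) = REnd"
  and tape_at_not_REnd: "p \<le> length w \<Longrightarrow> tape_at w p \<noteq> REnd"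
  and tape_at_not_LEnd: "1 \<le> p \<Longrightarrow> tape_at w p \<noteq> LEnd"
  by (simp_all add: tape_at_def)

context sim
begin

text \<open>The register holding the previous configuration is register par; the registers outside
  the two used ones stay at the basis state 0, i.e. at the encoding of the zero vector.\<close>
definition regs :: "nat \<Rightarrow> (nat \<Rightarrow> int) \<Rightarrow> (nat \<Rightarrow> int) \<Rightarrow> nat \<Rightarrow> nat \<Rightarrow> real" where
  "regs par X Y = (\<lambda>i. if i < 2 then (if i = par then aff_vec X else aff_vec Y) else aff_vec (\<lambda>_. 0))"

fun reg_par :: "vst \<Rightarrow> nat" where
  "reg_par (Stream b r rw (Ctx q sp d par st)) = par"
| "reg_par (Read (Ctx q sp d par st)) = par"
| "reg_par (Prepare (Ctx q sp d par st)) = par"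
| "reg_par (Check (Ctx q sp d par st)) = par"
| "reg_par _ = 0"

definition conf :: "vst \<Rightarrow> nat \<Rightarrow> (nat \<Rightarrow> int) \<Rightarrow> (nat \<Rightarrow> int) \<Rightarrow> hist \<Rightarrow> vconf" where
  "conf s p X Y h = (enc_vst s, p, regs (reg_par s) X Y, h)"

fun good_ctx :: "ctx \<Rightarrow> bool" where
  "good_ctx (Ctx q sp d par st) \<longleftrightarrow> q < tm_nst M \<and> sp < tm_nsym M \<and> d < 3 \<and> par < 2 \<and> st < tm_nsym M"

lemma good_ctx_valid:
  assumes "good_ctx x"
  shows "valid_vst (Read x)" "valid_vst (Prepare x)" "valid_vst (Check x)"
    "r < K \<Longrightarrow> valid_vst (Stream b r rw x)"
  using assms by (cases x; auto simp: valid_vst_def of_bool_def code_base_def)+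

lemma valid_Load: "pv < tm_nsym M \<Longrightarrow> valid_vst (Load pv)"
  by (auto simp: valid_vst_def code_base_def)

lemma start_conf: "start sim_verifier = conf Seek 0 (\<lambda>_. 0) (\<lambda>_. 0) []"
  by (auto simp: start_def conf_def sim_verifier_def regs_def aff_vec_zero)

lemma enc_vst_running:
  "valid_vst s \<Longrightarrow> s \<noteq> Accept \<Longrightarrow> s \<noteq> Reject \<Longrightarrow> enc_vst s \<notin> v_acc sim_verifier \<union> v_rej sim_verifier"
  using enc_vst_inj valid_vst_simple by (auto simp: sim_verifier_def)

lemma reach_acc_Accept: "reach sim_verifier (v_acc sim_verifier) P w m (enc_vst Accept, p, R, h) = 1"
  and reach_rej_Reject: "reach sim_verifier (v_rej sim_verifier) P w m (enc_vst Reject, p, R, h) = 1"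
  and reach_rej_Accept: "reach sim_verifier (v_rej sim_verifier) P w m (enc_vst Accept, p, R, h) = 0"
  using enc_Accept_neq_Reject by (cases m; auto simp: sim_verifier_def)+

lemma det_step_sim:
  assumes v: "valid_vst s" and running: "s \<noteq> Accept" "s \<noteq> Reject"
    and act: "\<And>i. i < 2 \<Longrightarrow> sim_act s (tape_at w p) (P w h) i \<noteq> None"
    and trans: "sim_trans s (tape_at w p) (P w h) (\<lambda>_. 0) = (s', d)" and v': "valid_vst s'"
  shows "det_step sim_verifier P w (enc_vst s, p, R, h)
     (enc_vst s', nat (int p + d), vstep sim_verifier (enc_vst s) (tape_at w p) (P w h) R (\<lambda>_. 0),
      hist_ext P w h)"
proof -
  have "\<And>i. \<not> weighed sim_verifier (enc_vst s) (tape_at w p) (P w h) i"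
    using act by (auto simp: weighed_def sim_verifier_def dec_enc_vst[OF v])
  from det_step_unweighed[where P = P and w = w and p = p and h = h, OF enc_vst_running[OF v running] this]
  show ?thesis using v_trans_sim_verifier[OF v trans v'] by (simp add: succ_conf_def)
qed

lemma vstep_regs:
  assumes v: "valid_vst s" and par: "par < 2"
    and act: "sim_act s a c par = Some (Fa, Ga)" "sim_act s a c (1 - par) = Some (Fb, Gb)"
  shows "vstep sim_verifier (enc_vst s) a c (regs par X Y) oc = regs par (aff_map Fa Ga X) (aff_map Fb Gb Y)"
proof
  fix i
  show "vstep sim_verifier (enc_vst s) a c (regs par X Y) oc i =
    regs par (aff_map Fa Ga X) (aff_map Fb Gb Y) i"
  proof (cases "i < 2")
    case True
    then have "i = par \<or> i = 1 - par" using par by auto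
    then show ?thesis
      using True act par
        by (auto simp: vstep_def sim_verifier_def dec_enc_vst[OF v] regs_def aff_mat_mult_aff_vec)
  next
    case False
    then show ?thesis by (simp add: vstep_def sim_verifier_def regs_def)
  qed
qed

lemma det_step_conf:
  assumes v: "valid_vst s" and running: "s \<noteq> Accept" "s \<noteq> Reject" and par: "reg_par s < 2"
    and act: "sim_act s (tape_at w p) (P w h) (reg_par s) = Some (Fa, Ga)"
      "sim_act s (tape_at w p) (P w h) (1 - reg_par s) = Some (Fb, Gb)"
    and trans: "sim_trans s (tape_at w p) (P w h) (\<lambda>_. 0) = (s', d)" and v': "valid_vst s'"
    and par': "reg_par s' = reg_par s" and p': "p' = nat (int p + d)"
    and X': "aff_vec X' = aff_vec (aff_map Fa Ga X)" and Y': "aff_vec Y' = aff_vec (aff_map Fb Gb Y)"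
  shows "det_step sim_verifier P w (conf s p X Y h) (conf s' p' X' Y' (hist_ext P w h))"
proof -
  have "sim_act s (tape_at w p) (P w h) i \<noteq> None" if "i < 2" for i
  proof -
    have "i = reg_par s \<or> i = 1 - reg_par s" using that par by auto
    then show ?thesis using act by auto
  qed
  from det_step_sim[where P = P and w = w and p = p and h = h, OF v running this trans v'] have
    "det_step sim_verifier P w (enc_vst s, p, regs (reg_par s) X Y, h) (enc_vst s', nat (int p + d),
       vstep sim_verifier (enc_vst s) (tape_at w p) (P w h) (regs (reg_par s) X Y) (\<lambda>_. 0), hist_ext P w h)" .
  moreover have "vstep sim_verifier (enc_vst s) (tape_at w p) (P w h) (regs (reg_par s) X Y) (\<lambda>_. 0) =
      regs (reg_par s) X' Y'"
    using vstep_regs[OF v par act, of X Y "\<lambda>_. 0"] unfolding X'[symmetric] Y'[symmetric] regs_def .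
  ultimately show ?thesis by (simp add: conf_def par' p')
qed

lemmas det_step_conf_id = det_step_conf[where Fa = id_mat and Ga = "\<lambda>_. 0" and Fb = id_mat and Gb = "\<lambda>_. 0"]

lemma step_seek:
  "p \<le> length w \<Longrightarrow>
   det_step sim_verifier P w (conf Seek p X Y h) (conf Seek (Suc p) X Y (hist_ext P w h))"
  by (rule det_step_conf_id[where d = 1]) (auto simp: valid_vst_simple tape_at_not_REnd id_aff_def aff_map_id)

lemma step_seek_end:
  "det_step sim_verifier P w (conf Seek (Suc (length w)) X Y h)
    (conf (Load 0) (length w) X Y (hist_ext P w h))"
  by (rule det_step_conf_id[where d = "-1"])
    (use tm_nsym_ge_2 in \<open>auto simp: valid_vst_simple tape_at_end id_aff_def aff_map_id valid_Load\<close>)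

lemma step_load:
  "1 \<le> p \<Longrightarrow> p \<le> length w \<Longrightarrow> pv < tm_nsym M \<Longrightarrow>
   det_step sim_verifier P w (conf (Load pv) p X Y h)
     (conf (Load (tm_enc M (w ! (p - 1)))) (p - 1) (shift_in sym_base 2 (int pv) X) Y (hist_ext P w h))"
  by (rule det_step_conf[where Fa = "shift_mat sym_base 2" and Ga = "shift_off 2 (int pv)"
        and Fb = id_mat and Gb = "\<lambda>_. 0" and d = "-1"])
    (auto simp: valid_Load tape_at_Sym id_aff_def aff_map_id aff_map_shift tm_enc_lt)

lemma step_load_end:
  "pv < tm_nsym M \<Longrightarrow>
   det_step sim_verifier P w (conf (Load pv) 0 X Y h)
     (conf (Stream False 0 False (Ctx (tm_q0 M) pv 0 0 0)) 0 X Y (hist_ext P w h))"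
  by (rule det_step_conf_id[where d = 0])
    (auto simp: valid_Load tape_at_0 id_aff_def aff_map_id good_ctx_valid tm_q0_lt K_pos tm_nsym_ge_2)

lemma coord_bounds: "1 \<le> stream_coord b" "stream_coord b \<le> 4" "1 \<le> copy_coord b" "copy_coord b \<le> 4"
  by (auto simp: stream_coord_def copy_coord_def)

lemma parity_neq: "par < (2::nat) \<Longrightarrow> (Suc 0 - par = par) = False"
  by (cases par) auto

lemma step_stream:
  "good_ctx x \<Longrightarrow> r < K \<Longrightarrow> p \<le> length w \<Longrightarrow>
   det_step sim_verifier P w (conf (Stream b r False x) p X Y h)
     (conf (Stream b r False x) (Suc p) (shift_in sym_base (stream_coord b) (int (P w h)) X)
        (shift_in sym_base (copy_coord b) (int (P w h)) Y) (hist_ext P w h))"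
  by (cases x, rule det_step_conf[where Fa = "shift_mat sym_base (stream_coord b)"
        and Ga = "shift_off (stream_coord b) (int (P w h))" and Fb = "shift_mat sym_base (copy_coord b)"
        and Gb = "shift_off (copy_coord b) (int (P w h))" and d = 1])
    (auto simp: good_ctx_valid tape_at_not_REnd aff_map_shift[OF coord_bounds(1,2)]
      aff_map_shift[OF coord_bounds(3,4)] parity_neq)

lemma step_stream_end:
  "good_ctx x \<Longrightarrow> r < K \<Longrightarrow>
   det_step sim_verifier P w (conf (Stream b r False x) (Suc (length w)) X Y h)
     (conf (Stream b r True x) (length w) X Y (hist_ext P w h))"
  by (cases x, rule det_step_conf_id[where d = "-1"])
    (auto simp: good_ctx_valid tape_at_end aff_map_id id_aff_def parity_neq)

lemma step_rewind:
  "good_ctx x \<Longrightarrow> r < K \<Longrightarrow> p \<le> length w \<Longrightarrow>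
   det_step sim_verifier P w (conf (Stream b r True x) (Suc p) X Y h)
     (conf (Stream b r True x) p X Y (hist_ext P w h))"
  by (cases x, rule det_step_conf_id[where d = "-1"])
    (auto simp: good_ctx_valid tape_at_not_LEnd aff_map_id id_aff_def parity_neq)

definition next_pass :: "bool \<Rightarrow> nat \<Rightarrow> ctx \<Rightarrow> vst" where
  "next_pass b r x = (if Suc r < K then Stream b (Suc r) False x else if b then Prepare x else Read x)"

lemma step_rewind_end:
  "good_ctx x \<Longrightarrow> r < K \<Longrightarrow>
   det_step sim_verifier P w (conf (Stream b r True x) 0 X Y h)
     (conf (next_pass b r x) 0 X Y (hist_ext P w h))"
  by (cases x, rule det_step_conf_id[where d = 0])
    (auto simp: good_ctx_valid tape_at_0 aff_map_id id_aff_def next_pass_def parity_neq)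

lemma step_read:
  "good_ctx (Ctx q sp d par st) \<Longrightarrow> P w h < tm_nsym M \<Longrightarrow> (d = 0 \<longrightarrow> P w h = sp) \<Longrightarrow>
   det_step sim_verifier P w (conf (Read (Ctx q sp d par st)) p X Y h)
     (conf (Stream True 0 False (Ctx q sp d par (P w h))) p X Y (hist_ext P w h))"
  by (rule det_step_conf_id[where d = 0]) (auto simp: good_ctx_valid aff_map_id id_aff_def K_pos parity_neq)

lemma read_reject:
  assumes good: "good_ctx (Ctx q sp d par st)" and bad: "\<not> (P w h < tm_nsym M \<and> (d = 0 \<longrightarrow> P w h = sp))"
  shows "reach sim_verifier (v_rej sim_verifier) P w (Suc m) (conf (Read (Ctx q sp d par st)) p X Y h) = 1"
proof -
  have "det_step sim_verifier P w (conf (Read (Ctx q sp d par st)) p X Y h) (enc_vst Reject, nat (int p + 0),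
     vstep sim_verifier (enc_vst (Read (Ctx q sp d par st))) (tape_at w p) (P w h) (regs par X Y) (\<lambda>_. 0),
     hist_ext P w h)"
    unfolding conf_def reg_par.simps
    by (rule det_step_sim) (use good bad in \<open>auto simp: good_ctx_valid valid_vst_simple\<close>)
  then show ?thesis unfolding det_step_def by (simp add: halting_set_def reach_rej_Reject)
qed

text \<open>For d = 1 (head moved right) the forms express L(t) = sp + b L(t-1) and R(t-1) = st + b R(t),
  for d = 2 (head moved left) L(t-1) = st + b L(t) and R(t) = sp + b R(t-1), where the register
  holds (L(t-1), R(t-1), L(t), R(t)) and b is sym_base.\<close>
definition test_vals :: "nat \<Rightarrow> nat \<Rightarrow> nat \<Rightarrow> (nat \<Rightarrow> int) \<Rightarrow> int \<times> int" where
  "test_vals sp d st X =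
     (if d = 0 then (X 3 - X 1, X 4 - X 2)
      else if d = 1 then (- sym_base * X 1 + X 3 - int sp, - X 2 + sym_base * X 4 + int st)
      else (X 1 - sym_base * X 3 - int st, - sym_base * X 2 + X 4 - int sp))"

lemma step_prepare:
  "good_ctx (Ctx q sp d par st) \<Longrightarrow>
   det_step sim_verifier P w (conf (Prepare (Ctx q sp d par st)) p X Y h)
     (conf (Check (Ctx q sp d par st)) p (test_vec (fst (test_vals sp d st X)) (snd (test_vals sp d st X))) Y
       (hist_ext P w h))"
  by (rule det_step_conf[where Fa = "fst (test_aff sp d st)" and Ga = "snd (test_aff sp d st)"
        and Fb = id_mat and Gb = "\<lambda>_. 0" and d = 0])
    (auto simp: good_ctx_valid aff_map_id id_aff_def test_aff_def test_vals_def aff_map_test parity_neq)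

lemma check_reach:
  fixes e1 e2 :: int and Y :: "nat \<Rightarrow> int" and p :: nat and h :: hist
  assumes good: "good_ctx (Ctx q sp d par st)" and S: "halting_set sim_verifier S"
  defines "cf \<equiv> conf (Check (Ctx q sp d par st)) p (test_vec e1 e2) Y h"
  shows "reach sim_verifier S P w (Suc m) cf =
    (\<Sum>u<5. \<bar>aff_vec (test_vec e1 e2) u\<bar> / (1 + 2 * \<bar>of_int e1\<bar> + 2 * \<bar>of_int e2\<bar>) *
       reach sim_verifier S P w m (succ_conf sim_verifier P w cf (outcome_at par u)))"
proof -
  let ?s = "Check (Ctx q sp d par st)"
  have v: "valid_vst ?s" using good_ctx_valid(3)[OF good] .
  have "weighed sim_verifier (enc_vst ?s) (tape_at w p) (P w h) j \<longleftrightarrow> j = par" for j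
    using good by (auto simp: weighed_def sim_verifier_def dec_enc_vst[OF v] id_aff_def)
  note sum_outs = sum_outs_single_weighed[OF this]
  have "enc_vst ?s \<notin> v_acc sim_verifier \<union> v_rej sim_verifier" by (rule enc_vst_running[OF v]) simp_all
  moreover have "regs par (test_vec e1 e2) Y par = aff_vec (test_vec e1 e2)" using good
    by (simp add: regs_def)
  ultimately show ?thesis
    using S unfolding cf_def conf_def reg_par.simps reach_Suc
    by (auto simp: halting_set_def sum_outs aff_vec_test_vec_abs_sum sim_verifier_sel simp del: reach.simps)
qed

lemma check_trans_nonzero:
  "good_ctx (Ctx q sp d par st) \<Longrightarrow> u \<noteq> 0 \<Longrightarrow>
   v_trans sim_verifier (enc_vst (Check (Ctx q sp d par st))) a c (outcome_at par u) = (enc_vst Reject, 0)"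
  using good_ctx_valid(3) valid_vst_simple by (simp add: sim_verifier_def dec_enc_vst outcome_at_def)

text \<open>A weighing outcome u \<noteq> 0 rejects, and these outcomes carry the weight
  (2|e1| + 2|e2|) / (1 + 2|e1| + 2|e2|).\<close>
lemma check_reject_ge:
  assumes good: "good_ctx (Ctx q sp d par st)" and ne: "e1 \<noteq> 0 \<or> e2 \<noteq> 0"
  shows "reach sim_verifier (v_rej sim_verifier) P w (Suc m)
    (conf (Check (Ctx q sp d par st)) p (test_vec e1 e2) Y h) \<ge> 2/3"
proof -
  let ?cf = "conf (Check (Ctx q sp d par st)) p (test_vec e1 e2) Y h"
  let ?D = "1 + 2 * \<bar>real_of_int e1\<bar> + 2 * \<bar>real_of_int e2\<bar>"
  let ?f = "\<lambda>u. reach sim_verifier (v_rej sim_verifier) P w m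
    (succ_conf sim_verifier P w ?cf (outcome_at par u))"
  have rej: "?f u = 1" if "u \<noteq> 0" for u
    using check_trans_nonzero[OF good that] by (simp add: succ_conf_def conf_def reach_rej_Reject)
  have "reach sim_verifier (v_rej sim_verifier) P w (Suc m) ?cf =
      1 / ?D * ?f 0 + (2 * \<bar>real_of_int e1\<bar> + 2 * \<bar>real_of_int e2\<bar>) / ?D"
    unfolding check_reach[OF good halting_set_rej] lessThan_5
    by (simp add: rej aff_vec_test_vec add_divide_distrib)
  moreover have "0 \<le> 1 / ?D * ?f 0" by (simp add: reach_nonneg)
  moreover have "2/3 \<le> (2 * \<bar>real_of_int e1\<bar> + 2 * \<bar>real_of_int e2\<bar>) / ?D"
    using ne by (simp add: field_simps) linarith
  ultimately show ?thesis by linarith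
qed

lemma check_pass_reach:
  fixes Y :: "nat \<Rightarrow> int" and p :: nat and h :: hist
  assumes good: "good_ctx (Ctx q sp d par st)" and S: "halting_set sim_verifier S"
  defines "cf \<equiv> conf (Check (Ctx q sp d par st)) p (test_vec 0 0) Y h"
  shows "reach sim_verifier S P w (Suc m) cf =
    reach sim_verifier S P w m (succ_conf sim_verifier P w cf (\<lambda>_. 0))"
proof -
  have "outcome_at par 0 = (\<lambda>_. 0)" by (auto simp: outcome_at_def)
  then show ?thesis
    unfolding cf_def check_reach[OF good S] lessThan_5 by (simp add: aff_vec_test_vec)
qed

lemma check_pass_accept:
  assumes good: "good_ctx (Ctx (tm_acc M) sp d par st)"
  shows "reach sim_verifier (v_acc sim_verifier) P w (Suc m)
      (conf (Check (Ctx (tm_acc M) sp d par st)) p (test_vec 0 0) Y h) = 1"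
    "reach sim_verifier (v_rej sim_verifier) P w (Suc m)
      (conf (Check (Ctx (tm_acc M) sp d par st)) p (test_vec 0 0) Y h) = 0"
proof -
  have "v_trans sim_verifier (enc_vst (Check (Ctx (tm_acc M) sp d par st))) a c (\<lambda>_. 0) = (enc_vst Accept, 0)"
    for a c by (rule v_trans_sim_verifier) (simp_all add: good_ctx_valid(3)[OF good] valid_vst_simple)
  then show "reach sim_verifier (v_acc sim_verifier) P w (Suc m)
      (conf (Check (Ctx (tm_acc M) sp d par st)) p (test_vec 0 0) Y h) = 1"
    "reach sim_verifier (v_rej sim_verifier) P w (Suc m)
      (conf (Check (Ctx (tm_acc M) sp d par st)) p (test_vec 0 0) Y h) = 0"
    using check_pass_reach[OF good halting_set_acc] check_pass_reach[OF good halting_set_rej]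
    by (simp_all add: succ_conf_def conf_def reach_acc_Accept reach_rej_Accept)
qed

lemma check_pass_reject:
  assumes good: "good_ctx (Ctx (tm_rej M) sp d par st)"
  shows "reach sim_verifier (v_rej sim_verifier) P w (Suc m)
    (conf (Check (Ctx (tm_rej M) sp d par st)) p (test_vec 0 0) Y h) = 1"
proof -
  have "v_trans sim_verifier (enc_vst (Check (Ctx (tm_rej M) sp d par st))) a c (\<lambda>_. 0) = (enc_vst Reject, 0)"
    for a c
      by (rule v_trans_sim_verifier) (use tm_acc_neq_rej in \<open>simp_all add: good_ctx_valid(3)[OF good] valid_vst_simple\<close>)
  then show ?thesis
    using check_pass_reach[OF good halting_set_rej] by (simp add: succ_conf_def conf_def reach_rej_Reject)
qed

text \<open>The weighed register collapses to basis state 0, which encodes the zero vector: it is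
  free to receive the next configuration, while the other register becomes the previous one.\<close>
lemma check_pass_vstep:
  assumes good: "good_ctx (Ctx q sp d par st)"
  shows "vstep sim_verifier (enc_vst (Check (Ctx q sp d par st))) a c (regs par X Y) (\<lambda>_. 0) =
    regs (1 - par) Y (\<lambda>_. 0)"
proof
  fix i
  have v: "valid_vst (Check (Ctx q sp d par st))" using good_ctx_valid(3)[OF good] .
  have par: "par < 2" using good by simp
  consider "i = par" | "i = 1 - par" | "2 \<le> i" using par by linarith
  then show "vstep sim_verifier (enc_vst (Check (Ctx q sp d par st))) a c (regs par X Y) (\<lambda>_. 0) i =
    regs (1 - par) Y (\<lambda>_. 0) i"
  proof cases
    case 1
    then show ?thesis using par
      by (auto simp: vstep_def sim_verifier_def dec_enc_vst[OF v] regs_def aff_vec_zero; presburger)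
  next
    case 2
    then have "i \<noteq> par" using par by (cases par) auto
    then show ?thesis using par 2 aff_map_id[of Y]
      by (auto simp: vstep_def sim_verifier_def dec_enc_vst[OF v] regs_def id_aff_def aff_mat_mult_aff_vec;
          presburger)
  next
    case 3
    then show ?thesis by (simp add: vstep_def sim_verifier_def regs_def)
  qed
qed

lemma check_pass_continue:
  assumes good: "good_ctx (Ctx q sp d par st)" and running: "q \<noteq> tm_acc M" "q \<noteq> tm_rej M"
    and delta: "tm_delta M q st = (q', s', d')"
  shows "det_step sim_verifier P w (conf (Check (Ctx q sp d par st)) p (test_vec 0 0) Y h)
     (conf (Stream False 0 False (Ctx q' s' (dir_code d') (1 - par) 0)) p Y (\<lambda>_. 0) (hist_ext P w h))"
proof -
  let ?x' = "Ctx q' s' (dir_code d') (1 - par) 0"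
  have v: "valid_vst (Check (Ctx q sp d par st))" using good_ctx_valid(3)[OF good] .
  have "good_ctx ?x'"
    using good tm_delta_bounds[OF _ _ delta] tm_nsym_ge_2 by (auto simp: dir_code_def)
  then have "valid_vst (Stream False 0 False ?x')" using good_ctx_valid(4) K_pos by blast
  then have trans: "v_trans sim_verifier (enc_vst (Check (Ctx q sp d par st))) a c (\<lambda>_. 0) =
      (enc_vst (Stream False 0 False ?x'), 0)" for a c
    using running delta by (intro v_trans_sim_verifier[OF v]) simp_all
  show ?thesis
    unfolding det_step_def
    using enc_vst_running[OF v] check_pass_reach[OF good] check_pass_vstep[OF good]
    by (simp add: conf_def succ_conf_def trans)
qed

lemma bdd_above_reach: "bdd_above (range (\<lambda>n. reach sim_verifier S P w n cf))"
proof (rule bdd_aboveI[of _ 1])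
  have "(\<forall>i. \<not> weighed sim_verifier q a c i) \<or> (\<exists>i. \<forall>j. weighed sim_verifier q a c j \<longleftrightarrow> j = i)" for q a c
  proof (cases "dec_vst q")
    case (Load pv)
    then show ?thesis by (cases a) (auto simp: weighed_def sim_verifier_def)
  next
    case (Stream b r rw x)
    then show ?thesis by (cases x) (auto simp: weighed_def sim_verifier_def)
  next
    case (Prepare x)
    then show ?thesis by (cases x) (auto simp: weighed_def sim_verifier_def)
  next
    case (Check x)
    then show ?thesis by (cases x) (auto simp: weighed_def sim_verifier_def)
  qed (auto simp: weighed_def sim_verifier_def)
  then show "x \<le> 1" if "x \<in> range (\<lambda>n. reach sim_verifier S P w n cf)" for x
    using that reach_le_1 by blast
qed

end

context sim
begin

text \<open>A sweep streams n + 1 symbols (head positions 0 to n), turns at the right end-marker and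
  walks back: 2n + 3 steps. A round consists of K sweeps for each tape half and three more
  steps (Read, Prepare, Check).\<close>
definition pass_len :: "'a list \<Rightarrow> nat" where
  "pass_len w = 2 * length w + 3"

definition round_len :: "'a list \<Rightarrow> nat" where
  "round_len w = 2 * K * pass_len w + 3"

lemma stream_run:
  assumes good: "good_ctx x" and r: "r < K" and "p + k \<le> Suc (length w)" and "Inv X Y h"
    and "\<And>X Y h'. Inv X Y h' \<Longrightarrow> length h' < length h + k \<Longrightarrow>
      Inv (shift_in sym_base (stream_coord b) (int (P w h')) X)
        (shift_in sym_base (copy_coord b) (int (P w h')) Y)
        (hist_ext P w h')"
  shows "\<exists>X' Y' h'. Inv X' Y' h' \<and> length h' = length h + k \<and>
    det_path sim_verifier P w k (conf (Stream b r False x) p X Y h)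
      (conf (Stream b r False x) (p + k) X' Y' h')"
  using assms(3-)
proof (induction k arbitrary: p X Y h)
  case 0
  then show ?case by (auto intro: det_path.intros)
next
  case (Suc k)
  let ?X1 = "shift_in sym_base (stream_coord b) (int (P w h)) X"
    and ?Y1 = "shift_in sym_base (copy_coord b) (int (P w h)) Y"
  have "Inv ?X1 ?Y1 (hist_ext P w h)" using Suc.prems(3)[OF Suc.prems(2)] by simp
  then obtain X' Y' h' where "Inv X' Y' h'" "length h' = length (hist_ext P w h) + k"
    "det_path sim_verifier P w k (conf (Stream b r False x) (Suc p) ?X1 ?Y1 (hist_ext P w h))
       (conf (Stream b r False x) (Suc p + k) X' Y' h')"
    using Suc.IH[of "Suc p" ?X1 ?Y1 "hist_ext P w h"] Suc.prems by auto
  moreover have "det_step sim_verifier P w (conf (Stream b r False x) p X Y h)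
      (conf (Stream b r False x) (Suc p) ?X1 ?Y1 (hist_ext P w h))"
    using step_stream[OF good r] Suc.prems(1) by simp
  ultimately show ?case by (intro exI[of _ X'] exI[of _ Y'] exI[of _ h']) (auto intro: det_path.intros)
qed

lemma rewind_run:
  assumes good: "good_ctx x" and r: "r < K" and "p \<le> Suc (length w)"
  shows "\<exists>h'. length h' = length h + p \<and>
    det_path sim_verifier P w p (conf (Stream b r True x) p X Y h) (conf (Stream b r True x) 0 X Y h')"
  using assms(3)
proof (induction p arbitrary: h)
  case 0
  then show ?case by (auto intro: det_path.intros)
next
  case (Suc p)
  obtain h' where "length h' = length (hist_ext P w h) + p"
    "det_path sim_verifier P w p (conf (Stream b r True x) p X Y (hist_ext P w h))
      (conf (Stream b r True x) 0 X Y h')"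
    using Suc.IH[of "hist_ext P w h"] Suc.prems by auto
  moreover have "det_step sim_verifier P w (conf (Stream b r True x) (Suc p) X Y h)
      (conf (Stream b r True x) p X Y (hist_ext P w h))"
    using step_rewind[OF good r] Suc.prems by simp
  ultimately show ?case by (intro exI[of _ h']) (auto intro: det_path.intros)
qed

lemma pass_run:
  assumes good: "good_ctx x" and r: "r < K" and inv: "Inv X Y h"
    and pres: "\<And>X Y h'. Inv X Y h' \<Longrightarrow> length h' < length h + Suc (length w) \<Longrightarrow>
      Inv (shift_in sym_base (stream_coord b) (int (P w h')) X)
        (shift_in sym_base (copy_coord b) (int (P w h')) Y)
        (hist_ext P w h')"
  shows "\<exists>X' Y' h1 h'. Inv X' Y' h1 \<and> length h1 = length h + Suc (length w) \<and>
    length h' = length h + pass_len w \<and>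
    det_path sim_verifier P w (pass_len w) (conf (Stream b r False x) 0 X Y h)
      (conf (next_pass b r x) 0 X' Y' h')"
proof -
  obtain X' Y' h1 where stream: "Inv X' Y' h1" "length h1 = length h + Suc (length w)"
    "det_path sim_verifier P w (Suc (length w)) (conf (Stream b r False x) 0 X Y h)
       (conf (Stream b r False x) (Suc (length w)) X' Y' h1)"
    using stream_run[where Inv = Inv and P = P and w = w and b = b and p = 0 and k = "Suc (length w)",
        OF good r _ inv pres] by auto
  obtain h2 where rewind: "length h2 = length (hist_ext P w h1) + length w"
    "det_path sim_verifier P w (length w) (conf (Stream b r True x) (length w) X' Y' (hist_ext P w h1))
       (conf (Stream b r True x) 0 X' Y' h2)"
    using rewind_run[where P = P and w = w and b = b and X = X' and Y = Y' and h = "hist_ext P w h1"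
        and p = "length w", OF good r] by auto
  have "det_path sim_verifier P w (Suc (length w) + (1 + (length w + 1))) (conf (Stream b r False x) 0 X Y h)
      (conf (next_pass b r x) 0 X' Y' (hist_ext P w h2))"
    by (intro det_path_trans[OF stream(3)] det_path_trans[OF det_path_single[OF step_stream_end[OF good r]]]
        det_path_trans[OF rewind(2)] det_path_single[OF step_rewind_end[OF good r]])
  moreover have "Suc (length w) + (1 + (length w + 1)) = pass_len w" by (simp add: pass_len_def)
  ultimately have "det_path sim_verifier P w (pass_len w) (conf (Stream b r False x) 0 X Y h)
      (conf (next_pass b r x) 0 X' Y' (hist_ext P w h2))" by simp
  moreover have "length (hist_ext P w h2) = length h + pass_len w"
    using stream(2) rewind(1) by (simp add: pass_len_def)
  ultimately show ?thesis using stream(1,2) by blast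
qed

lemma passes_run:
  assumes "r < K" "Inv r X Y h"
    and pass: "\<And>r X Y h. r < K \<Longrightarrow> Inv r X Y h \<Longrightarrow> \<exists>X' Y' h'. Inv (Suc r) X' Y' h' \<and>
      det_path sim_verifier P w (pass_len w) (conf (Stream b r False x) 0 X Y h)
        (conf (next_pass b r x) 0 X' Y' h')"
  shows "\<exists>X' Y' h'. Inv K X' Y' h' \<and>
    det_path sim_verifier P w ((K - r) * pass_len w) (conf (Stream b r False x) 0 X Y h)
      (conf (if b then Prepare x else Read x) 0 X' Y' h')"
  using assms(1,2)
proof (induction "K - r" arbitrary: r X Y h)
  case 0
  then show ?case by simp
next
  case (Suc j)
  obtain X' Y' h' where first: "Inv (Suc r) X' Y' h'"
    "det_path sim_verifier P w (pass_len w) (conf (Stream b r False x) 0 X Y h)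
      (conf (next_pass b r x) 0 X' Y' h')"
    using pass[OF Suc.prems] by blast
  show ?case
  proof (cases "Suc r < K")
    case True
    moreover have "j = K - Suc r" using Suc.hyps(2) by simp
    ultimately obtain X'' Y'' h'' where rest: "Inv K X'' Y'' h''"
      "det_path sim_verifier P w ((K - Suc r) * pass_len w) (conf (Stream b (Suc r) False x) 0 X' Y' h')
         (conf (if b then Prepare x else Read x) 0 X'' Y'' h'')"
      using Suc.hyps(1)[of "Suc r" X' Y' h'] first(1) by blast
    from first(2) True have "det_path sim_verifier P w (pass_len w) (conf (Stream b r False x) 0 X Y h)
        (conf (Stream b (Suc r) False x) 0 X' Y' h')" by (simp add: next_pass_def)
    from det_path_trans[OF this rest(2)] have "det_path sim_verifier P w ((K - r) * pass_len w)
        (conf (Stream b r False x) 0 X Y h) (conf (if b then Prepare x else Read x) 0 X'' Y'' h'')"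
      using True by (simp add: Suc_diff_Suc[symmetric])
    then show ?thesis using rest(1) by blast
  next
    case False
    then have "Suc r = K" "K - r = 1" using Suc.prems(1) by simp_all
    moreover have "next_pass b r x = (if b then Prepare x else Read x)" using False
      by (simp add: next_pass_def)
    ultimately show ?thesis using first by (intro exI[of _ X'] exI[of _ Y'] exI[of _ h']) simp
  qed
qed

lemma passes_run_inv:
  assumes good: "good_ctx x" and "Inv X Y"
    and pres: "\<And>X Y c. Inv X Y \<Longrightarrow>
      Inv (shift_in sym_base (stream_coord b) c X) (shift_in sym_base (copy_coord b) c Y)"
  shows "\<exists>X' Y' h'. Inv X' Y' \<and>
    det_path sim_verifier P w (K * pass_len w) (conf (Stream b 0 False x) 0 X Y h)
      (conf (if b then Prepare x else Read x) 0 X' Y' h')"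
proof -
  have "\<exists>X' Y' h'. Inv X' Y' \<and>
      det_path sim_verifier P w (pass_len w) (conf (Stream b r False x) 0 X Y h)
        (conf (next_pass b r x) 0 X' Y' h')"
    if "r < K" "Inv X Y" for r X Y h
    using pass_run[where Inv = "\<lambda>X Y h. Inv X Y", OF good that pres] by blast
  from passes_run[where Inv = "\<lambda>r X Y h. Inv X Y", OF K_pos assms(2) this] show ?thesis by simp
qed

end

text \<open>With head positions bounded by cs (|w| + 1), every non-blank cell lies within distance
  (2 cs + 2)(|w| + 1) of the head, so windows of that width lose nothing.\<close>
locale sim_lin = sim M K for M :: "'a dtm" and K :: nat +
  fixes cs :: nat
  assumes head_bound: "\<And>w t. \<bar>tm_head M w t\<bar> \<le> int cs * (int (length w) + 1)"
    and K_eq: "K = 2 * cs + 2"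
begin

definition win :: "'a list \<Rightarrow> nat" where
  "win w = K * (length w + 1)"

definition left_val :: "'a list \<Rightarrow> nat \<Rightarrow> int" where
  "left_val w t = left_num sym_base (tm_tape M w t) (tm_head M w t) (win w)"

definition right_val :: "'a list \<Rightarrow> nat \<Rightarrow> int" where
  "right_val w t = right_num sym_base (tm_tape M w t) (tm_head M w t) (win w)"

definition scanned :: "'a list \<Rightarrow> nat \<Rightarrow> nat" where
  "scanned w t = tm_tape M w t (tm_head M w t)"

text \<open>The symbol written and the head move of the step into time t; at time 0 a fictitious
  stationary step that wrote the first input symbol.\<close>
definition pending :: "'a list \<Rightarrow> nat \<Rightarrow> nat \<times> nat" where
  "pending w t =
     (if t = 0 then (tm_tape M w 0 0, 0)
      else case tm_delta M (tm_state M w (t - 1)) (scanned w (t - 1)) of (q', s', d') \<Rightarrow> (s', dir_code d'))"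

lemma tape_blank_outside:
  assumes "\<bar>j - tm_head M w t\<bar> \<ge> int (win w)"
  shows "tm_tape M w t j = 0"
proof (rule ccontr)
  define A where "A = int cs * (int (length w) + 1)"
  assume "tm_tape M w t j \<noteq> 0"
  then have "- A \<le> j" "j \<le> A + int (length w)"
    using tm_tape_support[of M w A t j] head_bound unfolding A_def by blast+
  moreover have "\<bar>tm_head M w t\<bar> \<le> A" using head_bound unfolding A_def .
  moreover have "int (win w) = 2 * A + 2 * int (length w) + 2"
    unfolding win_def A_def by (simp add: K_eq algebra_simps)
  ultimately show False using assms by (simp add: abs_le_iff) linarith
qed

lemma scanned_lt: "scanned w t < tm_nsym M"
  by (simp add: scanned_def tm_tape_lt)

lemma pending_bounds: "fst (pending w t) < tm_nsym M" "snd (pending w t) < 3"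
proof -
  have "s' < tm_nsym M" if "tm_delta M (tm_state M w (t - 1)) (scanned w (t - 1)) = (q', s', d')" for q' s' d'
    using tm_delta_bounds[OF tm_state_lt scanned_lt that] by simp
  then show "fst (pending w t) < tm_nsym M" "snd (pending w t) < 3"
    by (auto simp: pending_def dir_code_def tm_tape_lt split: prod.splits)
qed

lemma window_step:
  assumes running: "tm_state M w t \<notin> {tm_acc M, tm_rej M}"
    and delta: "tm_delta M (tm_state M w t) (scanned w t) = (q', s', d)"
  shows "d = 0 \<Longrightarrow> left_val w (Suc t) = left_val w t \<and> right_val w (Suc t) = right_val w t \<and>
      scanned w (Suc t) = s'"
    and "d = 1 \<Longrightarrow> left_val w (Suc t) = int s' + sym_base * left_val w t \<and>
      int (scanned w (Suc t)) + sym_base * right_val w (Suc t) = right_val w t"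
    and "d = -1 \<Longrightarrow> left_val w t = int (scanned w (Suc t)) + sym_base * left_val w (Suc t) \<and>
      right_val w (Suc t) = int s' + sym_base * right_val w t"
proof -
  let ?T = "tm_tape M w t" and ?h = "tm_head M w t" and ?W = "win w"
  have tape: "tm_tape M w (Suc t) = ?T(?h := s')" and head: "tm_head M w (Suc t) = ?h + d"
    using tm_conf_Suc_running[OF running] delta by (simp_all add: scanned_def)
  have "0 < ?W" using K_pos by (simp add: win_def)
  then obtain m where W: "?W = Suc m" by (metis gr0_implies_Suc)
  have blank: "\<bar>j - ?h\<bar> \<ge> int ?W \<Longrightarrow> ?T j = 0" for j by (rule tape_blank_outside)
  show "d = 0 \<Longrightarrow> left_val w (Suc t) = left_val w t \<and> right_val w (Suc t) = right_val w t \<and>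
      scanned w (Suc t) = s'"
    using tape head by (simp add: left_val_def right_val_def scanned_def left_num_write right_num_write)
  have "?T (?h - int (Suc m)) = 0" "?T (?h + int (Suc m)) = 0" by (rule blank, use W in simp)+
  moreover have "?T (?h + 1 + int ?W) = 0" "?T (?h - 1 - int ?W) = 0" by (rule blank, simp)+
  ultimately show "d = 1 \<Longrightarrow> left_val w (Suc t) = int s' + sym_base * left_val w t \<and>
      int (scanned w (Suc t)) + sym_base * right_val w (Suc t) = right_val w t"
    "d = -1 \<Longrightarrow> left_val w t = int (scanned w (Suc t)) + sym_base * left_val w (Suc t) \<and>
      right_val w (Suc t) = int s' + sym_base * right_val w t"
    using tape head left_num_move_right[of ?T ?h m sym_base s'] right_num_move_right[of ?T ?h ?W sym_base s']
      left_num_move_left[of ?T ?h ?W sym_base s'] right_num_move_left[of ?T ?h m sym_base s']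
    unfolding left_val_def right_val_def scanned_def W by simp_all
qed

text \<open>The scanned symbol and the digits of the window halves are below sym_base, so a
  shifted-in digit is determined by the sum it enters.\<close>
lemma test_vals_zero_iff:
  assumes running: "t = 0 \<or> tm_state M w (t - 1) \<notin> {tm_acc M, tm_rej M}"
    and prev: "X 1 = left_val w (t - 1)" "X 2 = right_val w (t - 1)"
    and st: "st < tm_nsym M" "snd (pending w t) = 0 \<longrightarrow> st = fst (pending w t)"
  shows "test_vals (fst (pending w t)) (snd (pending w t)) st X = (0, 0) \<longleftrightarrow>
    X 3 = left_val w t \<and> X 4 = right_val w t \<and> st = scanned w t"
proof (cases t)
  case 0
  then show ?thesis using prev st by (auto simp: pending_def test_vals_def scanned_def tm_init_vals)
next
  case (Suc t0)
  obtain q' s' d where delta: "tm_delta M (tm_state M w t0) (scanned w t0) = (q', s', d)"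
    by (metis prod_cases3)
  have running': "tm_state M w t0 \<notin> {tm_acc M, tm_rej M}" using running Suc by simp
  have pending: "pending w t = (s', dir_code d)" using Suc delta by (simp add: pending_def)
  have digit: "0 \<le> int st" "int st < sym_base" "0 \<le> int (scanned w t)" "int (scanned w t) < sym_base"
    using st(1) scanned_lt by (auto simp: sym_base_def)
  have prev': "X 1 = left_val w t0" "X 2 = right_val w t0" using prev Suc by simp_all
  note step = window_step[OF running' delta, folded Suc]
  consider "d = 0" | "d = 1" | "d = -1"
    using tm_delta_bounds(3)[OF tm_state_lt scanned_lt delta] by auto
  then show ?thesis
  proof cases
    case 1
    then have "pending w t = (s', 0)" using pending by (simp add: dir_code_def)
    then show ?thesis using step(1)[OF 1] prev' st by (auto simp: test_vals_def)
  next
    case 2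
    then have "pending w t = (s', 1)" using pending by (simp add: dir_code_def)
    then have "test_vals (fst (pending w t)) (snd (pending w t)) st X = (0, 0) \<longleftrightarrow>
        X 3 = left_val w t \<and> int st + sym_base * X 4 = int (scanned w t) + sym_base * right_val w t"
      using step(2)[OF 2] prev' unfolding test_vals_def by auto
    then show ?thesis using digit_unique[OF digit, of "X 4" "right_val w t"] by auto
  next
    case 3
    then have "pending w t = (s', 2)" using pending by (simp add: dir_code_def)
    then have "test_vals (fst (pending w t)) (snd (pending w t)) st X = (0, 0) \<longleftrightarrow>
        X 4 = right_val w t \<and> int st + sym_base * X 3 = int (scanned w t) + sym_base * left_val w t"
      using step(3)[OF 3] prev' unfolding test_vals_def by auto
    then show ?thesis using digit_unique[OF digit, of "X 3" "left_val w t"] by auto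
  qed
qed

text \<open>For t = 0 the truncated subtraction t - 1 = 0 makes the previous windows in round_regs
  those of the initial configuration; the fictitious stationary step recorded in pending w 0
  then compares the streamed configuration with them.\<close>
definition round_ctx :: "'a list \<Rightarrow> nat \<Rightarrow> nat \<Rightarrow> ctx" where
  "round_ctx w t st = Ctx (tm_state M w t) (fst (pending w t)) (snd (pending w t)) (t mod 2) st"

definition round_vst :: "'a list \<Rightarrow> nat \<Rightarrow> vst" where
  "round_vst w t = Stream False 0 False (round_ctx w t 0)"

definition round_regs :: "'a list \<Rightarrow> nat \<Rightarrow> (nat \<Rightarrow> int) \<Rightarrow> (nat \<Rightarrow> int) \<Rightarrow> bool" where
  "round_regs w t X Y \<longleftrightarrow> X 1 = left_val w (t - 1) \<and> X 2 = right_val w (t - 1) \<and> X 3 = 0 \<and> X 4 = 0 \<and>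
     Y 1 = 0 \<and> Y 2 = 0 \<and> Y 3 = 0 \<and> Y 4 = 0"

lemma good_round_ctx: "st < tm_nsym M \<Longrightarrow> good_ctx (round_ctx w t st)"
  using pending_bounds[of w t] tm_state_lt by (simp add: round_ctx_def)

lemma seek_run:
  "k + p = Suc (length w) \<Longrightarrow> \<exists>h'. length h' = length h + k \<and>
     det_path sim_verifier P w k (conf Seek p X Y h) (conf Seek (Suc (length w)) X Y h')"
proof (induction k arbitrary: p h)
  case 0
  then show ?case by (auto intro: det_path.intros)
next
  case (Suc k)
  obtain h' where "length h' = length (hist_ext P w h) + k"
    "det_path sim_verifier P w k (conf Seek (Suc p) X Y (hist_ext P w h)) (conf Seek (Suc (length w)) X Y h')"
    using Suc.IH[of "Suc p" "hist_ext P w h"] Suc.prems by auto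
  moreover have "det_step sim_verifier P w (conf Seek p X Y h) (conf Seek (Suc p) X Y (hist_ext P w h))"
    using step_seek Suc.prems by simp
  ultimately show ?case by (intro exI[of _ h']) (auto intro: det_path.intros)
qed

lemma load_run:
  assumes "j \<le> length w" "X 2 = right_num sym_base (tm_tape M w 0) (int j) (length w - 1 - j)"
  shows "\<exists>X' h'. X' 2 = right_num sym_base (tm_tape M w 0) 0 (length w - 1) \<and> (\<forall>i. i \<noteq> 2 \<longrightarrow> X' i = X i) \<and>
    length h' = length h + j \<and>
    det_path sim_verifier P w j (conf (Load (tm_tape M w 0 (int j))) j X Y h)
      (conf (Load (tm_tape M w 0 0)) 0 X' Y h')"
  using assms
proof (induction j arbitrary: X h)
  case 0
  then show ?case by (auto intro: det_path.intros)
next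
  case (Suc j)
  let ?T = "tm_tape M w 0"
  let ?X1 = "shift_in sym_base 2 (int (?T (int (Suc j)))) X"
  have j: "j < length w" using Suc.prems by simp
  have step: "det_step sim_verifier P w (conf (Load (?T (int (Suc j)))) (Suc j) X Y h)
      (conf (Load (?T (int j))) j ?X1 Y (hist_ext P w h))"
  proof -
    have "tm_enc M (w ! j) = ?T (int j)" using j by (simp add: tm_init_vals)
    then show ?thesis
      using step_load[where p = "Suc j" and w = w and pv = "?T (int (Suc j))" and P = P and h = h and X = X
          and Y = Y] j tm_tape_lt by simp
  qed
  have "?X1 2 = right_num sym_base ?T (int j) (length w - 1 - j)"
  proof (cases "Suc j < length w")
    case True
    then have "length w - 1 - j = Suc (length w - 1 - Suc j)" by simp
    then show ?thesis using Suc.prems(2) by (simp add: shift_in_def right_num_Suc_shift algebra_simps)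
  next
    case False
    then have "Suc j = length w" using Suc.prems by simp
    then show ?thesis using Suc.prems(2) by (simp add: shift_in_def tm_init_vals right_num_def)
  qed
  then obtain X' h' where "X' 2 = right_num sym_base ?T 0 (length w - 1)" "\<forall>i. i \<noteq> 2 \<longrightarrow> X' i = ?X1 i"
    "length h' = length (hist_ext P w h) + j"
    "det_path sim_verifier P w j (conf (Load (?T (int j))) j ?X1 Y (hist_ext P w h))
      (conf (Load (?T 0)) 0 X' Y h')"
    using Suc.IH[of ?X1 "hist_ext P w h"] j by auto
  with step show ?case
    by (intro exI[of _ X'] exI[of _ h']) (auto simp: shift_in_def intro: det_path.intros)
qed

text \<open>The initial phase loads the input, i.e. the right half of the initial window, into the
  previous register.\<close>
lemma init_run:
  "\<exists>X h. length h = pass_len w \<and> round_regs w 0 X (\<lambda>_. 0) \<and>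
     det_path sim_verifier P w (pass_len w) (start sim_verifier) (conf (round_vst w 0) 0 X (\<lambda>_. 0) h)"
proof -
  let ?T = "tm_tape M w 0" and ?n = "length w" and ?Z = "\<lambda>_::nat. 0::int"
  obtain h1 where seek: "length h1 = Suc ?n"
    "det_path sim_verifier P w (Suc ?n) (conf Seek 0 ?Z ?Z []) (conf Seek (Suc ?n) ?Z ?Z h1)"
    using seek_run[of "Suc ?n" 0 w "[]" P ?Z ?Z] by auto
  have blank_end: "?T (int ?n) = 0" by (simp add: tm_init_vals)
  obtain X h2 where load: "X 2 = right_num sym_base ?T 0 (?n - 1)" "\<forall>i. i \<noteq> 2 \<longrightarrow> X i = 0"
    "length h2 = length (hist_ext P w h1) + ?n"
    "det_path sim_verifier P w ?n (conf (Load 0) ?n ?Z ?Z (hist_ext P w h1)) (conf (Load (?T 0)) 0 X ?Z h2)"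
    using load_run[where j = ?n and X = ?Z and w = w and h = "hist_ext P w h1" and P = P and Y = ?Z]
    unfolding blank_end by (auto simp: right_num_def)
  have "det_path sim_verifier P w (Suc ?n + (1 + (?n + 1))) (conf Seek 0 ?Z ?Z [])
      (conf (Stream False 0 False (Ctx (tm_q0 M) (?T 0) 0 0 0)) 0 X ?Z (hist_ext P w h2))"
    by (intro det_path_trans[OF seek(2)] det_path_trans[OF det_path_single[OF step_seek_end]]
        det_path_trans[OF load(4)] det_path_single[OF step_load_end[OF tm_tape_lt]])
  moreover have "Suc ?n + (1 + (?n + 1)) = pass_len w" by (simp add: pass_len_def)
  moreover have "round_vst w 0 = Stream False 0 False (Ctx (tm_q0 M) (?T 0) 0 0 0)"
    by (simp add: round_vst_def round_ctx_def pending_def tm_init_vals)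
  ultimately have path: "det_path sim_verifier P w (pass_len w) (start sim_verifier)
      (conf (round_vst w 0) 0 X ?Z (hist_ext P w h2))"
    by (simp add: start_conf)
  have "left_val w 0 = 0"
    unfolding left_val_def left_num_def by (rule sum.neutral) (auto simp: tm_init_vals)
  moreover have "right_val w 0 = right_num sym_base ?T 0 (?n - 1)"
    unfolding right_val_def tm_init_vals(2)
  proof (rule right_num_blank_ext)
    show "?n - 1 \<le> win w"
      using mult_le_mono1[of 1 K "?n + 1"] K_pos by (simp add: win_def)
  qed (auto simp: tm_init_vals)
  ultimately have "round_regs w 0 X ?Z" using load(1,2) by (simp add: round_regs_def)
  moreover have "length (hist_ext P w h2) = pass_len w" using seek(1) load(3) by (simp add: pass_len_def)
  ultimately show ?thesis using path by blast
qed

lemma round_next: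
  assumes running: "tm_state M w t \<notin> {tm_acc M, tm_rej M}"
  shows "det_step sim_verifier P w (conf (Check (round_ctx w t (scanned w t))) 0 (test_vec 0 0) Y h)
    (conf (round_vst w (Suc t)) 0 Y (\<lambda>_. 0) (hist_ext P w h))"
proof -
  obtain q' s' d where delta: "tm_delta M (tm_state M w t) (scanned w t) = (q', s', d)"
    by (metis prod_cases3)
  have "Suc t mod 2 = 1 - t mod 2" by (cases "t mod 2 = 0") (auto simp: mod_Suc)
  then have "round_vst w (Suc t) = Stream False 0 False (Ctx q' s' (dir_code d) (1 - t mod 2) 0)"
    using tm_conf_Suc_running(1)[OF running] delta
    by (simp add: round_vst_def round_ctx_def pending_def scanned_def)
  moreover have
    "good_ctx (Ctx (tm_state M w t) (fst (pending w t)) (snd (pending w t)) (t mod 2) (scanned w t))"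
    using good_round_ctx[OF scanned_lt] by (simp add: round_ctx_def)
  ultimately show ?thesis
    using check_pass_continue[OF _ _ _ delta, where P = P and w = w and p = 0 and Y = Y and h = h] running
    by (simp add: round_ctx_def)
qed

section \<open>Soundness\<close>

lemma read_to_check:
  assumes st: "P w h < tm_nsym M" "snd (pending w t) = 0 \<longrightarrow> P w h = fst (pending w t)"
    and inv: "X 1 = left_val w (t - 1)" "X 2 = right_val w (t - 1)" "X 4 = 0" "X 3 = Y 1" "Y 2 = 0" "Y 3 = 0"
      "Y 4 = 0"
    and path: "det_path sim_verifier P w n cf (conf (Read (round_ctx w t 0)) 0 X Y h)"
  shows "\<exists>N X' Y' h'. X' 1 = left_val w (t - 1) \<and> X' 2 = right_val w (t - 1) \<and>
    Y' 1 = X' 3 \<and> Y' 2 = X' 4 \<and> Y' 3 = 0 \<and> Y' 4 = 0 \<and>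
    det_path sim_verifier P w N cf
      (conf (Check (round_ctx w t (P w h))) 0
        (test_vec (fst (test_vals (fst (pending w t)) (snd (pending w t)) (P w h) X'))
           (snd (test_vals (fst (pending w t)) (snd (pending w t)) (P w h) X'))) Y' h')"
proof -
  let ?x = "round_ctx w t (P w h)"
  let ?Inv = "\<lambda>X Y. X 1 = left_val w (t - 1) \<and> X 2 = right_val w (t - 1) \<and> Y 3 = 0 \<and> Y 4 = 0 \<and>
    X 3 = Y 1 \<and> X 4 = Y 2"
  have good: "good_ctx ?x" using good_round_ctx st by simp
  have read: "det_step sim_verifier P w (conf (Read (round_ctx w t 0)) 0 X Y h)
      (conf (Stream True 0 False ?x) 0 X Y (hist_ext P w h))"
    using step_read[where P = P and w = w and h = h] good_round_ctx[of 0] tm_nsym_ge_2 st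
    unfolding round_ctx_def by simp
  obtain X' Y' h' where right: "?Inv X' Y'"
    "det_path sim_verifier P w (K * pass_len w) (conf (Stream True 0 False ?x) 0 X Y (hist_ext P w h))
       (conf (Prepare ?x) 0 X' Y' h')"
    using passes_run_inv[where Inv = ?Inv and b = True and P = P and w = w and X = X and Y = Y
        and h = "hist_ext P w h", OF good] inv
    by (auto simp: shift_in_def stream_coord_def copy_coord_def)
  let ?E = "test_vals (fst (pending w t)) (snd (pending w t)) (P w h) X'"
  have "det_step sim_verifier P w (conf (Prepare ?x) 0 X' Y' h')
      (conf (Check ?x) 0 (test_vec (fst ?E) (snd ?E)) Y' (hist_ext P w h'))"
    using step_prepare[where P = P and w = w and h = h'] good unfolding round_ctx_def by simp
  with path read right(2) have "det_path sim_verifier P w (n + (1 + (K * pass_len w + 1))) cf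
      (conf (Check ?x) 0 (test_vec (fst ?E) (snd ?E)) Y' (hist_ext P w h'))"
    by (intro det_path_trans det_path_single)
  then show ?thesis using right(1) by (intro exI conjI) auto
qed

lemma round_stream:
  assumes regs: "round_regs w t X Y"
  shows "(\<exists>m. reach sim_verifier (v_rej sim_verifier) P w m (conf (round_vst w t) 0 X Y h) \<ge> 2/3) \<or>
    (\<exists>st N X' Y' h'. st < tm_nsym M \<and> (snd (pending w t) = 0 \<longrightarrow> st = fst (pending w t)) \<and>
       X' 1 = left_val w (t - 1) \<and> X' 2 = right_val w (t - 1) \<and>
       Y' 1 = X' 3 \<and> Y' 2 = X' 4 \<and> Y' 3 = 0 \<and> Y' 4 = 0 \<and>
       det_path sim_verifier P w N (conf (round_vst w t) 0 X Y h)
         (conf (Check (round_ctx w t st)) 0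
           (test_vec (fst (test_vals (fst (pending w t)) (snd (pending w t)) st X'))
              (snd (test_vals (fst (pending w t)) (snd (pending w t)) st X'))) Y' h'))"
proof -
  let ?Inv = "\<lambda>X Y. X 1 = left_val w (t - 1) \<and> X 2 = right_val w (t - 1) \<and> X 4 = 0 \<and> X 3 = Y 1 \<and>
    Y 2 = 0 \<and> Y 3 = 0 \<and> Y 4 = 0"
  have good: "good_ctx (round_ctx w t 0)" using good_round_ctx tm_nsym_ge_2 by simp
  obtain X1 Y1 h1 where left: "X1 1 = left_val w (t - 1)" "X1 2 = right_val w (t - 1)" "X1 4 = 0"
    "X1 3 = Y1 1" "Y1 2 = 0" "Y1 3 = 0" "Y1 4 = 0"
    "det_path sim_verifier P w (K * pass_len w) (conf (round_vst w t) 0 X Y h)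
       (conf (Read (round_ctx w t 0)) 0 X1 Y1 h1)"
    using passes_run_inv[where Inv = ?Inv and b = False and P = P and w = w and X = X and Y = Y
        and h = h, OF good] regs
    by (auto simp: round_vst_def round_regs_def shift_in_def stream_coord_def copy_coord_def)
  show ?thesis
  proof (cases "P w h1 < tm_nsym M \<and> (snd (pending w t) = 0 \<longrightarrow> P w h1 = fst (pending w t))")
    case False
    then have "reach sim_verifier (v_rej sim_verifier) P w (Suc 0)
      (conf (Read (round_ctx w t 0)) 0 X1 Y1 h1) = 1"
      using read_reject[where P = P and w = w and h = h1] good unfolding round_ctx_def by simp
    then show ?thesis
      using det_path_reach_ge[OF left(8) halting_set_rej, where m = "Suc 0" and r = "2/3"] by simp
  next
    case True
    obtain N X' Y' h' where "X' 1 = left_val w (t - 1)" "X' 2 = right_val w (t - 1)"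
      "Y' 1 = X' 3" "Y' 2 = X' 4" "Y' 3 = 0" "Y' 4 = 0"
      "det_path sim_verifier P w N (conf (round_vst w t) 0 X Y h)
         (conf (Check (round_ctx w t (P w h1))) 0
           (test_vec (fst (test_vals (fst (pending w t)) (snd (pending w t)) (P w h1) X'))
              (snd (test_vals (fst (pending w t)) (snd (pending w t)) (P w h1) X'))) Y' h')"
      using read_to_check[OF conjunct1[OF True] conjunct2[OF True] left] by blast
    with True show ?thesis
      by (intro disjI2 exI[of _ "P w h1"] exI[of _ N] exI[of _ X'] exI[of _ Y'] exI[of _ h']) simp
  qed
qed

lemma round_sound:
  assumes running: "t = 0 \<or> tm_state M w (t - 1) \<notin> {tm_acc M, tm_rej M}" and regs: "round_regs w t X Y"
  shows "(\<exists>m. reach sim_verifier (v_rej sim_verifier) P w m (conf (round_vst w t) 0 X Y h) \<ge> 2/3) \<or>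
    (\<exists>N Y' h'. round_regs w (Suc t) Y' (\<lambda>_. 0) \<and> det_path sim_verifier P w N (conf (round_vst w t) 0 X Y h)
       (conf (Check (round_ctx w t (scanned w t))) 0 (test_vec 0 0) Y' h'))"
  using round_stream[OF regs, of P h]
proof (elim disjE exE conjE)
  fix st N X' Y' h'
  let ?E = "test_vals (fst (pending w t)) (snd (pending w t)) st X'"
  assume st: "st < tm_nsym M" "snd (pending w t) = 0 \<longrightarrow> st = fst (pending w t)"
    and prev: "X' 1 = left_val w (t - 1)" "X' 2 = right_val w (t - 1)"
    and Y': "Y' 1 = X' 3" "Y' 2 = X' 4" "Y' 3 = 0" "Y' 4 = 0"
    and path: "det_path sim_verifier P w N (conf (round_vst w t) 0 X Y h)
      (conf (Check (round_ctx w t st)) 0 (test_vec (fst ?E) (snd ?E)) Y' h')"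
  show ?thesis
  proof (cases "?E = (0, 0)")
    case True
    then have "X' 3 = left_val w t \<and> X' 4 = right_val w t \<and> st = scanned w t"
      using test_vals_zero_iff[OF running prev st] by simp
    then show ?thesis using True path Y' by (auto simp: round_regs_def)
  next
    case False
    then have "fst ?E \<noteq> 0 \<or> snd ?E \<noteq> 0" by (cases ?E) auto
    then have "2/3 \<le> reach sim_verifier (v_rej sim_verifier) P w (Suc 0)
        (conf (Check (round_ctx w t st)) 0 (test_vec (fst ?E) (snd ?E)) Y' h')"
      using check_reject_ge good_round_ctx[OF st(1)] unfolding round_ctx_def by blast
    then show ?thesis using det_path_reach_ge[OF path halting_set_rej] by blast
  qed
qed auto

lemma reject_from_round:
  assumes rej: "tm_state M w T = tm_rej M" and running: "\<forall>t<T. tm_state M w t \<notin> {tm_acc M, tm_rej M}"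
  shows "t \<le> T \<Longrightarrow> round_regs w t X Y \<Longrightarrow>
    \<exists>m. reach sim_verifier (v_rej sim_verifier) P w m (conf (round_vst w t) 0 X Y h) \<ge> 2/3"
proof (induction "T - t" arbitrary: t X Y h rule: less_induct)
  case less
  have "t = 0 \<or> tm_state M w (t - 1) \<notin> {tm_acc M, tm_rej M}" using running less.prems(1) by auto
  from round_sound[OF this less.prems(2), of P h] show ?case
  proof (elim disjE exE conjE)
    fix N Y' h'
    assume regs': "round_regs w (Suc t) Y' (\<lambda>_. 0)"
      and path: "det_path sim_verifier P w N (conf (round_vst w t) 0 X Y h)
        (conf (Check (round_ctx w t (scanned w t))) 0 (test_vec 0 0) Y' h')"
    show ?thesis
    proof (cases "t = T")
      case True
      then have "good_ctx (Ctx (tm_rej M) (fst (pending w t)) (snd (pending w t)) (t mod 2) (scanned w t))"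
        using good_round_ctx[OF scanned_lt, of w t] rej by (simp add: round_ctx_def)
      then have "reach sim_verifier (v_rej sim_verifier) P w (Suc 0)
          (conf (Check (round_ctx w t (scanned w t))) 0 (test_vec 0 0) Y' h') = 1"
        using check_pass_reject rej True by (simp add: round_ctx_def)
      then show ?thesis using det_path_reach_ge[OF path halting_set_rej, where m = "Suc 0" and r = "2/3"]
        by simp
    next
      case False
      then have "t < T" using less.prems(1) by simp
      then obtain m where "reach sim_verifier (v_rej sim_verifier) P w m
          (conf (round_vst w (Suc t)) 0 Y' (\<lambda>_. 0) (hist_ext P w h')) \<ge> 2/3"
        using less.hyps[of "Suc t"] regs' by fastforce
      moreover have "det_path sim_verifier P w (N + 1) (conf (round_vst w t) 0 X Y h)
          (conf (round_vst w (Suc t)) 0 Y' (\<lambda>_. 0) (hist_ext P w h'))"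
        using det_path_trans[OF path det_path_single[OF round_next]] running \<open>t < T\<close> by blast
      ultimately show ?thesis using det_path_reach_ge[OF _ halting_set_rej] by blast
    qed
  qed auto
qed

lemma rej_prob_ge:
  assumes "tm_state M w T = tm_rej M" "\<forall>t<T. tm_state M w t \<notin> {tm_acc M, tm_rej M}"
  shows "rej_prob sim_verifier P w \<ge> 2/3"
proof -
  obtain X h where init: "round_regs w 0 X (\<lambda>_. 0)"
    "det_path sim_verifier P w (pass_len w) (start sim_verifier) (conf (round_vst w 0) 0 X (\<lambda>_. 0) h)"
    using init_run by blast
  obtain m where "reach sim_verifier (v_rej sim_verifier) P w m (start sim_verifier) \<ge> 2/3"
    using reject_from_round[OF assms _ init(1), of P h] det_path_reach_ge[OF init(2) halting_set_rej] by blast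
  moreover have
    "reach sim_verifier (v_rej sim_verifier) P w m (start sim_verifier) \<le> rej_prob sim_verifier P w"
    unfolding rej_prob_def by (rule cSUP_upper[OF _ bdd_above_reach]) simp
  ultimately show ?thesis by linarith
qed

section \<open>The honest prover\<close>

text \<open>Digit k of the window half b, in streaming order: the most significant digit, i.e. the cell
  farthest from the head, comes first.\<close>
definition window_digit :: "'a list \<Rightarrow> nat \<Rightarrow> bool \<Rightarrow> nat \<Rightarrow> nat" where
  "window_digit w t b k =
     (if b then tm_tape M w t (tm_head M w t + int (win w) - int k)
      else tm_tape M w t (tm_head M w t - int (win w) + int k))"

lemma horner_window_digit:
  "horner sym_base (\<lambda>k. int (window_digit w t False k)) (win w) = left_val w t"
  "horner sym_base (\<lambda>k. int (window_digit w t True k)) (win w) = right_val w t"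
  unfolding window_digit_def left_val_def right_val_def
  by (simp_all add: horner_left_num horner_right_num)

definition half_offset :: "'a list \<Rightarrow> bool \<Rightarrow> nat" where
  "half_offset w b = (if b then K * pass_len w + 1 else 0)"

text \<open>The message sent after i steps: after the initial phase of pass_len w steps, round t
  occupies the steps from pass_len w + t round_len w on; the left half is streamed first, then
  the scanned symbol is announced, then the right half is streamed.\<close>
definition honest_msg :: "'a list \<Rightarrow> nat \<Rightarrow> nat" where
  "honest_msg w i =
     (if i < pass_len w then 0 else
      let t = (i - pass_len w) div round_len w; u = (i - pass_len w) mod round_len w in
      if u = K * pass_len w then scanned w t else
      let b = K * pass_len w < u; v = u - half_offset w b in
      if v < K * pass_len w \<and> v mod pass_len w \<le> length w
      then window_digit w t b (v div pass_len w * (length w + 1) + v mod pass_len w) else 0)"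

definition honest_prover :: "'a prover" where
  "honest_prover w h = honest_msg w (length h)"

lemma honest_msg_lt: "honest_msg w i < tm_nsym M"
  unfolding honest_msg_def window_digit_def Let_def using tm_tape_lt scanned_lt tm_nsym_ge_2 by auto

lemma honest_msg_scanned: "honest_msg w (pass_len w + t * round_len w + K * pass_len w) = scanned w t"
proof -
  have "K * pass_len w < round_len w" by (simp add: round_len_def)
  then show ?thesis by (simp add: honest_msg_def)
qed

lemma honest_msg_stream:
  assumes r: "r < K" and j: "j \<le> length w"
  shows "honest_msg w (pass_len w + t * round_len w + half_offset w b + r * pass_len w + j) =
    window_digit w t b (r * (length w + 1) + j)"
proof -
  let ?v = "r * pass_len w + j" and ?u = "half_offset w b + r * pass_len w + j"
  have "j < pass_len w" using j by (simp add: pass_len_def)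
  then have v: "?v div pass_len w = r" "?v mod pass_len w = j" by simp_all
  have "?v < Suc r * pass_len w" using \<open>j < pass_len w\<close> by simp
  also have "\<dots> \<le> K * pass_len w" using r by (intro mult_right_mono) auto
  finally have v_less: "?v < K * pass_len w" .
  then have "?u < round_len w" "?u \<noteq> K * pass_len w" "(K * pass_len w < ?u) = b"
    by (auto simp: half_offset_def round_len_def)
  then have "(t * round_len w + ?u) div round_len w = t" "(t * round_len w + ?u) mod round_len w = ?u"
    by simp_all
  then show ?thesis
    using \<open>?u \<noteq> K * pass_len w\<close> \<open>(K * pass_len w < ?u) = b\<close> v v_less j
    by (simp add: honest_msg_def add.assoc)
qed

lemma pass_run_horner:
  fixes b :: bool and X Y :: "nat \<Rightarrow> int"
  assumes good: "good_ctx x" and r: "r < K" and len: "length h = l + r * pass_len w"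
    and msg: "\<And>j h'. j \<le> length w \<Longrightarrow> length h' = l + r * pass_len w + j \<Longrightarrow>
      int (P w h') = D (r * (length w + 1) + j)"
  defines "X\<^sub>r \<equiv> \<lambda>r. X(stream_coord b := horner sym_base D (r * (length w + 1)))"
    and "Y\<^sub>r \<equiv> \<lambda>r. Y(copy_coord b := horner sym_base D (r * (length w + 1)))"
  shows "\<exists>h'. length h' = l + Suc r * pass_len w \<and> det_path sim_verifier P w (pass_len w)
    (conf (Stream b r False x) 0 (X\<^sub>r r) (Y\<^sub>r r) h) (conf (next_pass b r x) 0 (X\<^sub>r (Suc r)) (Y\<^sub>r (Suc r)) h')"
proof -
  let ?n = "length w"
  define Inv where "Inv X' Y' h' \<longleftrightarrow> length h \<le> length h' \<and> length h' \<le> length h + (?n + 1) \<and>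
    X' = X(stream_coord b := horner sym_base D (r * (?n + 1) + (length h' - length h))) \<and>
    Y' = Y(copy_coord b := horner sym_base D (r * (?n + 1) + (length h' - length h)))"
    for X' Y' and h' :: hist
  have "Inv (X\<^sub>r r) (Y\<^sub>r r) h" by (simp add: Inv_def X\<^sub>r_def Y\<^sub>r_def)
  moreover have "Inv (shift_in sym_base (stream_coord b) (int (P w h')) X')
      (shift_in sym_base (copy_coord b) (int (P w h')) Y') (hist_ext P w h')"
    if "Inv X' Y' h'" "length h' < length h + Suc ?n" for X' Y' h'
  proof -
    let ?j = "length h' - length h"
    have "?j \<le> ?n" "length h' = l + r * pass_len w + ?j" using that len by (auto simp: Inv_def)
    then have "int (P w h') = D (r * (?n + 1) + ?j)" by (rule msg)
    moreover have "Suc (length h') - length h = Suc ?j" using that by (simp add: Inv_def Suc_diff_le)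
    ultimately show ?thesis using that by (simp add: Inv_def shift_in_def)
  qed
  ultimately obtain X' Y' h1 h' where "Inv X' Y' h1" "length h1 = length h + Suc ?n"
    "length h' = length h + pass_len w"
    "det_path sim_verifier P w (pass_len w) (conf (Stream b r False x) 0 (X\<^sub>r r) (Y\<^sub>r r) h)
       (conf (next_pass b r x) 0 X' Y' h')"
    using pass_run[where Inv = Inv and P = P and w = w and b = b, OF good r] by blast
  moreover from this(1,2) have "X' = X\<^sub>r (Suc r)" "Y' = Y\<^sub>r (Suc r)"
    by (simp_all add: Inv_def X\<^sub>r_def Y\<^sub>r_def algebra_simps)
  ultimately show ?thesis using len by (auto simp: algebra_simps)
qed

lemma passes_run_horner:
  assumes good: "good_ctx x" and len: "length h = l"
    and msg: "\<And>r j h'. r < K \<Longrightarrow> j \<le> length w \<Longrightarrow> length h' = l + r * pass_len w + j \<Longrightarrow>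
      int (P w h') = D (r * (length w + 1) + j)"
    and zero: "X (stream_coord b) = 0" "Y (copy_coord b) = 0"
  shows "\<exists>h'. length h' = l + K * pass_len w \<and>
    det_path sim_verifier P w (K * pass_len w) (conf (Stream b 0 False x) 0 X Y h)
      (conf (if b then Prepare x else Read x) 0 (X(stream_coord b := horner sym_base D (win w)))
        (Y(copy_coord b := horner sym_base D (win w))) h')"
proof -
  define Inv where "Inv r X' Y' h' \<longleftrightarrow> length h' = l + r * pass_len w \<and>
    X' = X(stream_coord b := horner sym_base D (r * (length w + 1))) \<and>
    Y' = Y(copy_coord b := horner sym_base D (r * (length w + 1)))" for r X' Y' and h' :: hist
  have "Inv 0 X Y h" using len zero by (simp add: Inv_def fun_upd_idem)
  moreover have "\<exists>X'' Y'' h''. Inv (Suc r) X'' Y'' h'' \<and>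
      det_path sim_verifier P w (pass_len w) (conf (Stream b r False x) 0 X' Y' h')
        (conf (next_pass b r x) 0 X'' Y'' h'')"
    if "r < K" "Inv r X' Y' h'" for r X' Y' h'
    using pass_run_horner[OF good \<open>r < K\<close>, where h = h' and l = l and P = P and D = D and X = X and b = b
        and Y = Y] msg[OF \<open>r < K\<close>] that(2)
    by (fastforce simp: Inv_def)
  ultimately show ?thesis
    using passes_run[where Inv = Inv, OF K_pos] by (simp add: Inv_def win_def)
qed

lemma pending_stay:
  assumes running: "t = 0 \<or> tm_state M w (t - 1) \<notin> {tm_acc M, tm_rej M}" and "snd (pending w t) = 0"
  shows "scanned w t = fst (pending w t)"
proof (cases t)
  case 0
  then show ?thesis by (simp add: pending_def scanned_def tm_init_vals)
next
  case (Suc t0)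
  obtain q' s' d where delta: "tm_delta M (tm_state M w t0) (scanned w t0) = (q', s', d)"
    by (metis prod_cases3)
  have "d \<in> {-1, 0, 1}" using tm_delta_bounds[OF tm_state_lt scanned_lt delta] by simp
  moreover have "pending w t = (s', dir_code d)" using Suc delta by (simp add: pending_def)
  ultimately have "d = 0" using assms(2) by (auto simp: dir_code_def)
  then show ?thesis
    using window_step(1)[where w = w and t = t0, OF _ delta] running Suc \<open>pending w t = (s', dir_code d)\<close>
      by simp
qed

lemma honest_half:
  fixes b :: bool
  assumes good: "good_ctx x" and len: "length h = pass_len w + t * round_len w + half_offset w b"
    and zero: "X (stream_coord b) = 0" "Y (copy_coord b) = 0"
  defines "v \<equiv> if b then right_val w t else left_val w t"
  shows "\<exists>h'. length h' = length h + K * pass_len w \<and>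
    det_path sim_verifier honest_prover w (K * pass_len w) (conf (Stream b 0 False x) 0 X Y h)
      (conf (if b then Prepare x else Read x) 0 (X(stream_coord b := v)) (Y(copy_coord b := v)) h')"
proof -
  have "int (honest_prover w h') = int (window_digit w t b (r * (length w + 1) + j))"
    if "r < K" "j \<le> length w" "length h' = length h + r * pass_len w + j" for r j h'
  proof -
    have "length h' = pass_len w + t * round_len w + half_offset w b + r * pass_len w + j" using that(3) len
      by simp
    then show ?thesis using honest_msg_stream[OF that(1,2), where t = t and b = b]
      by (simp add: honest_prover_def)
  qed
  moreover have "horner sym_base (\<lambda>k. int (window_digit w t b k)) (win w) = v"
    using horner_window_digit[of w t] unfolding v_def by (cases b) simp_all
  ultimately show ?thesis
    using passes_run_horner[where P = honest_prover and D = "\<lambda>k. int (window_digit w t b k)" and w = w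
      and h = h
      and l = "length h" and b = b and X = X and Y = Y, OF good refl _ zero] by simp
qed

lemma round_honest:
  assumes running: "t = 0 \<or> tm_state M w (t - 1) \<notin> {tm_acc M, tm_rej M}" and regs: "round_regs w t X Y"
    and len: "length h = pass_len w + t * round_len w"
  shows "\<exists>Y' h'. round_regs w (Suc t) Y' (\<lambda>_. 0) \<and> length h' = length h + (round_len w - 1) \<and>
    det_path sim_verifier honest_prover w (round_len w - 1) (conf (round_vst w t) 0 X Y h)
      (conf (Check (round_ctx w t (scanned w t))) 0 (test_vec 0 0) Y' h')"
proof -
  let ?x = "round_ctx w t (scanned w t)"
  let ?X1 = "X(3 := left_val w t)" and ?Y1 = "Y(1 := left_val w t)"
  let ?X2 = "?X1(4 := right_val w t)" and ?Y2 = "?Y1(2 := right_val w t)"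
  have good0: "good_ctx (round_ctx w t 0)" and good: "good_ctx ?x"
    using good_round_ctx tm_nsym_ge_2 scanned_lt by simp_all
  obtain h1 where left: "length h1 = length h + K * pass_len w"
    "det_path sim_verifier honest_prover w (K * pass_len w) (conf (round_vst w t) 0 X Y h)
       (conf (Read (round_ctx w t 0)) 0 ?X1 ?Y1 h1)"
    using honest_half[where b = False and w = w and t = t and X = X and Y = Y and h = h, OF good0] len regs
    by (auto simp: round_vst_def round_regs_def half_offset_def stream_coord_def copy_coord_def)
  have "honest_prover w h1 = scanned w t"
    using honest_msg_scanned[of w t] left(1) len by (simp add: honest_prover_def)
  then have read: "det_step sim_verifier honest_prover w (conf (Read (round_ctx w t 0)) 0 ?X1 ?Y1 h1)
      (conf (Stream True 0 False ?x) 0 ?X1 ?Y1 (hist_ext honest_prover w h1))"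
    using step_read[where P = honest_prover and w = w and h = h1] good0 scanned_lt pending_stay[OF running]
    unfolding round_ctx_def by simp
  obtain h2 where right: "length h2 = length h1 + 1 + K * pass_len w"
    "det_path sim_verifier honest_prover w (K * pass_len w)
       (conf (Stream True 0 False ?x) 0 ?X1 ?Y1 (hist_ext honest_prover w h1))
         (conf (Prepare ?x) 0 ?X2 ?Y2 h2)"
    using honest_half[where b = True and w = w and t = t and X = ?X1 and Y = ?Y1
        and h = "hist_ext honest_prover w h1",
        OF good] left(1) len regs
    by (auto simp: round_regs_def half_offset_def stream_coord_def copy_coord_def)
  have "test_vals (fst (pending w t)) (snd (pending w t)) (scanned w t) ?X2 = (0, 0)"
    using test_vals_zero_iff[OF running _ _ scanned_lt] pending_stay[OF running] regs
      by (simp add: round_regs_def)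
  moreover have
    "good_ctx (Ctx (tm_state M w t) (fst (pending w t)) (snd (pending w t)) (t mod 2) (scanned w t))"
    using good by (simp add: round_ctx_def)
  note step_prepare[OF this, where P = honest_prover and w = w and h = h2 and X = ?X2 and p = 0 and Y = ?Y2]
  ultimately have prepare: "det_step sim_verifier honest_prover w (conf (Prepare ?x) 0 ?X2 ?Y2 h2)
      (conf (Check ?x) 0 (test_vec 0 0) ?Y2 (hist_ext honest_prover w h2))"
    unfolding round_ctx_def by simp
  from left(2) read right(2) prepare
  have "det_path sim_verifier honest_prover w (K * pass_len w + (1 + (K * pass_len w + 1)))
      (conf (round_vst w t) 0 X Y h) (conf (Check ?x) 0 (test_vec 0 0) ?Y2 (hist_ext honest_prover w h2))"
    by (intro det_path_trans det_path_single)
  moreover have "K * pass_len w + (1 + (K * pass_len w + 1)) = round_len w - 1" by (simp add: round_len_def)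
  moreover have "round_regs w (Suc t) ?Y2 (\<lambda>_. 0)" using regs by (simp add: round_regs_def)
  moreover have "length (hist_ext honest_prover w h2) = length h + (round_len w - 1)"
    using left(1) right(1) by (simp add: round_len_def)
  ultimately show ?thesis by (intro exI[of _ ?Y2] exI[of _ "hist_ext honest_prover w h2"]) simp
qed

lemma honest_path:
  assumes running: "\<forall>t'<T. tm_state M w t' \<notin> {tm_acc M, tm_rej M}"
  shows "t \<le> T \<Longrightarrow> \<exists>X Y h. round_regs w t X Y \<and> length h = pass_len w + t * round_len w \<and>
    det_path sim_verifier honest_prover w (pass_len w + t * round_len w) (start sim_verifier)
      (conf (round_vst w t) 0 X Y h)"
proof (induction t)
  case 0
  then show ?case using init_run[of w honest_prover] by auto
next
  case (Suc t)
  then obtain X Y h where prev: "round_regs w t X Y" "length h = pass_len w + t * round_len w"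
    "det_path sim_verifier honest_prover w (pass_len w + t * round_len w) (start sim_verifier)
       (conf (round_vst w t) 0 X Y h)"
    by auto
  have "t = 0 \<or> tm_state M w (t - 1) \<notin> {tm_acc M, tm_rej M}" using running Suc.prems by auto
  then obtain Y' h' where round: "round_regs w (Suc t) Y' (\<lambda>_. 0)" "length h' = length h + (round_len w - 1)"
    "det_path sim_verifier honest_prover w (round_len w - 1) (conf (round_vst w t) 0 X Y h)
       (conf (Check (round_ctx w t (scanned w t))) 0 (test_vec 0 0) Y' h')"
    using round_honest[OF _ prev(1,2)] by blast
  have "tm_state M w t \<notin> {tm_acc M, tm_rej M}" using running Suc.prems by simp
  from det_path_trans[OF prev(3) det_path_trans[OF round(3) det_path_single[OF round_next[OF this]]]]
  have "det_path sim_verifier honest_prover w (pass_len w + t * round_len w + (round_len w - 1 + 1))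
      (start sim_verifier) (conf (round_vst w (Suc t)) 0 Y' (\<lambda>_. 0) (hist_ext honest_prover w h'))" .
  moreover have "pass_len w + t * round_len w + (round_len w - 1 + 1) = pass_len w + Suc t * round_len w"
    by (simp add: round_len_def)
  ultimately have
    "det_path sim_verifier honest_prover w (pass_len w + Suc t * round_len w) (start sim_verifier)
      (conf (round_vst w (Suc t)) 0 Y' (\<lambda>_. 0) (hist_ext honest_prover w h'))"
    by (simp only:)
  moreover have "length (hist_ext honest_prover w h') = pass_len w + Suc t * round_len w"
    using prev(2) round(2) by (simp add: round_len_def)
  ultimately show ?case using round(1) by blast
qed

lemma honest_accepts:
  assumes acc: "tm_state M w T = tm_acc M" and running: "\<forall>t<T. tm_state M w t \<notin> {tm_acc M, tm_rej M}"
  shows "acc_prob sim_verifier honest_prover w = 1"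
    "exp_time_le sim_verifier honest_prover w (real (pass_len w + Suc T * round_len w))"
proof -
  let ?x = "round_ctx w T (scanned w T)"
  obtain X Y h where rounds: "round_regs w T X Y" "length h = pass_len w + T * round_len w"
    "det_path sim_verifier honest_prover w (pass_len w + T * round_len w) (start sim_verifier)
       (conf (round_vst w T) 0 X Y h)"
    using honest_path[OF running, of T] by auto
  have "T = 0 \<or> tm_state M w (T - 1) \<notin> {tm_acc M, tm_rej M}" using running by auto
  then obtain Y' h' where "det_path sim_verifier honest_prover w (round_len w - 1)
      (conf (round_vst w T) 0 X Y h) (conf (Check ?x) 0 (test_vec 0 0) Y' h')"
    using round_honest[OF _ rounds(1,2)] by blast
  with rounds(3) have path: "det_path sim_verifier honest_prover w
      (pass_len w + T * round_len w + (round_len w - 1)) (start sim_verifier)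
        (conf (Check ?x) 0 (test_vec 0 0) Y' h')"
    by (rule det_path_trans)
  have good: "good_ctx (Ctx (tm_acc M) (fst (pending w T)) (snd (pending w T)) (T mod 2) (scanned w T))"
    using good_round_ctx[OF scanned_lt, of w T] acc by (simp add: round_ctx_def)
  have "fst (conf (Check ?x) 0 (test_vec 0 0) Y' h') \<notin> v_acc sim_verifier \<union> v_rej sim_verifier"
    using enc_vst_running[OF good_ctx_valid(3)[OF good]] acc by (simp add: conf_def round_ctx_def)
  from det_path_accept[OF path this] check_pass_accept[OF good] acc
  have run: "acc_prob sim_verifier honest_prover w = 1"
    "exp_time_le sim_verifier honest_prover w (real (Suc (pass_len w + T * round_len w + (round_len w - 1))))"
    by (simp_all add: round_ctx_def)
  have "Suc (pass_len w + T * round_len w + (round_len w - 1)) = pass_len w + Suc T * round_len w"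
    by (simp add: round_len_def)
  with run show "acc_prob sim_verifier honest_prover w = 1"
    "exp_time_le sim_verifier honest_prover w (real (pass_len w + Suc T * round_len w))"
    by (simp_all only:)
qed

lemma honest_time_bound:
  assumes "1 \<le> length w" "1 \<le> T"
  shows "pass_len w + Suc T * round_len w \<le> (20 * K + 11) * length w * T"
proof -
  let ?n = "length w"
  have "pass_len w \<le> 5 * ?n" using assms(1) by (simp add: pass_len_def)
  also have "\<dots> \<le> 5 * ?n * T" using assms(2) by simp
  finally have "pass_len w \<le> 5 * ?n * T" .
  moreover have "round_len w \<le> (10 * K + 3) * ?n"
    using assms(1) mult_le_mono2[of 1 ?n "10 * K + 3"]
    by (simp add: round_len_def pass_len_def algebra_simps)
  then have "Suc T * round_len w \<le> (2 * T) * ((10 * K + 3) * ?n)"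
    using assms(2) by (intro mult_le_mono) auto
  ultimately show ?thesis by (simp add: algebra_simps)
qed

lemma sim_verifier_verifies:
  assumes "tm_decides M L"
  shows "valid_prover sim_verifier honest_prover" "sound sim_verifier L (1/3)"
    "w \<in> L \<Longrightarrow> acc_prob sim_verifier honest_prover w = 1"
    "w \<in> L \<Longrightarrow> exp_time_le sim_verifier honest_prover w
       (real (pass_len w + Suc (tm_time M w) * round_len w))"
proof -
  show "valid_prover sim_verifier honest_prover"
    by (simp add: valid_prover_def sim_verifier_def honest_prover_def honest_msg_lt)
  show "sound sim_verifier L (1/3)"
    unfolding sound_def
    using rej_prob_ge[OF _ tm_time_facts(2)[OF assms]] tm_time_facts(1,3)[OF assms] by fastforce
  assume "w \<in> L"
  then have "tm_state M w (tm_time M w) = tm_acc M" using tm_time_facts(3)[OF assms] by simp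
  from honest_accepts[OF this tm_time_facts(2)[OF assms]]
  show "acc_prob sim_verifier honest_prover w = 1"
    "exp_time_le sim_verifier honest_prover w (real (pass_len w + Suc (tm_time M w) * round_len w))" .
qed

end

text \<open>If the start state of the machine is already halting, the running time is 0 and the
  time bound may be 0 as well, so the verifier has to halt before its first step.\<close>
definition const_verifier :: "bool \<Rightarrow> 'a verifier" where
  "const_verifier b =
     \<lparr> v_nst = 1, v_nmsg = 1, v_q0 = 0, v_acc = (if b then {0} else {}), v_rej = (if b then {} else {0}),
       v_nreg = 0, v_rdim = (\<lambda>_. 1), v_act = (\<lambda>_ _ _ _. None), v_trans = (\<lambda>_ _ _ _. (0, 0)) \<rparr>"

lemma const_verifier_verifies:
  fixes L :: "'a list set"
  assumes "\<And>w. w \<in> L \<longleftrightarrow> b"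
  shows "wf_verifier (const_verifier b)" "rational_verifier (const_verifier b)"
    "valid_prover (const_verifier b) (\<lambda>_ _. 0)" "sound (const_verifier b) L (1/3)"
    "w \<in> L \<Longrightarrow> acc_prob (const_verifier b) (\<lambda>_ _. 0) w = 1"
    "w \<in> L \<Longrightarrow> exp_time_le (const_verifier b) (\<lambda>_ _. 0) w 0"
proof -
  have reach_start: "reach (const_verifier b) S P w n (start (const_verifier b)) = (if 0 \<in> S then 1 else 0)"
    for b S P and w :: "'a list" and n
    by (cases n) (auto simp: start_def const_verifier_def)
  show "wf_verifier (const_verifier b)" "rational_verifier (const_verifier b)"
    "valid_prover (const_verifier b) (\<lambda>_ _. 0)"
    by (auto simp: wf_verifier_def rational_verifier_def valid_prover_def const_verifier_def)
  show "sound (const_verifier b) L (1/3)"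
    using assms by (simp add: sound_def rej_prob_def reach_start) (simp add: const_verifier_def)
  assume "w \<in> L"
  then show "acc_prob (const_verifier b) (\<lambda>_ _. 0) w = 1" "exp_time_le (const_verifier b) (\<lambda>_ _. 0) w 0"
    using assms by (simp_all add: acc_prob_def exp_time_le_def reach_start) (simp_all add: const_verifier_def)
qed

lemma linear_space_verifier:
  fixes M :: "'a dtm"
  assumes wf: "wf_dtm M" and dec: "tm_decides M L" and lin: "tm_linear_space M"
  shows "\<exists>V P k. wf_verifier V \<and> rational_verifier V \<and> valid_prover V P \<and> sound V L (1/3) \<and>
     (\<forall>w\<in>L. acc_prob V P w = 1) \<and> 0 \<le> k \<and>
     (\<forall>w\<in>L. 1 \<le> length w \<longrightarrow> exp_time_le V P w (k * real (length w) * real (tm_time M w)))"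
proof (cases "tm_q0 M \<in> {tm_acc M, tm_rej M}")
  case True
  then have "w \<in> L \<longleftrightarrow> tm_q0 M = tm_acc M" for w
    using tm_time_facts[OF dec, of w] tm_init_vals(1)[of M w] by (metis neq0_conv)
  from const_verifier_verifies[OF this] show ?thesis
    by (intro exI[of _ "const_verifier (tm_q0 M = tm_acc M)"] exI[of _ "\<lambda>_ _. 0"] exI[of _ 0]) auto
next
  case False
  obtain cs where "\<forall>w n. \<bar>snd (snd (tm_conf M w n))\<bar> \<le> int cs * (int (length w) + 1)"
    using lin unfolding tm_linear_space_def by blast
  then interpret sim_lin M "2 * cs + 2" cs
    by unfold_locales (use wf in \<open>auto simp: tm_head_def\<close>)
  have "exp_time_le sim_verifier honest_prover w
      (real (20 * (2 * cs + 2) + 11) * real (length w) * real (tm_time M w))"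
    if "w \<in> L" "1 \<le> length w" for w
  proof (rule exp_time_le_mono[OF sim_verifier_verifies(4)[OF dec that(1)]])
    have "tm_time M w \<noteq> 0" using False tm_time_facts(1)[OF dec, of w] tm_init_vals(1) by metis
    then show "real (pass_len w + Suc (tm_time M w) * round_len w)
      \<le> real (20 * (2 * cs + 2) + 11) * real (length w) * real (tm_time M w)"
      using honest_time_bound[OF that(2), of "tm_time M w"] of_nat_mono by fastforce
  qed
  then show ?thesis
    using wf_sim_verifier rational_sim_verifier sim_verifier_verifies[OF dec]
    by (intro exI[of _ sim_verifier] exI[of _ honest_prover])
      (auto intro!: exI[of _ "real (20 * (2 * cs + 2) + 11)"])
qed

lemma DSPACE_lin_subset_AM_q_1_2ADfA: "DSPACE_lin \<subseteq> AM_q_1_2ADfA"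
proof
  fix L
  assume "L \<in> DSPACE_lin"
  then show "L \<in> AM_q_1_2ADfA"
    using linear_space_verifier unfolding DSPACE_lin_def AM_q_1_2ADfA_def
    by (fastforce intro!: exI[of _ "1/3 :: real"])
qed

lemma linear_space_time_verifier:
  fixes M :: "'a dtm" and t :: "nat \<Rightarrow> nat"
  assumes M: "wf_dtm M" "tm_decides M L" "tm_linear_space M"
    and time: "\<forall>w. N \<le> length w \<longrightarrow> real (tm_time M w) \<le> c * real (t (length w))"
  shows "\<exists>V \<epsilon>. wf_verifier V \<and> rational_verifier V \<and> \<epsilon> < 1/2 \<and>
    (\<exists>P. valid_prover V P \<and> (\<forall>w\<in>L. acc_prob V P w \<ge> 1 - \<epsilon>) \<and>
      (\<exists>c N. \<forall>w\<in>L. N \<le> length w \<longrightarrow> exp_time_le V P w (c * real (length w) * real (t (length w))))) \<and>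
    sound V L \<epsilon>"
proof -
  obtain V P k where V: "wf_verifier V" "rational_verifier V" "valid_prover V P" "sound V L (1/3)"
    "\<forall>w\<in>L. acc_prob V P w = 1" "0 \<le> k"
    and exp_time: "\<And>w. w \<in> L \<Longrightarrow> 1 \<le> length w \<Longrightarrow>
      exp_time_le V P w (k * real (length w) * real (tm_time M w))"
    using linear_space_verifier[OF M] by blast
  have "exp_time_le V P w ((k * c) * real (length w) * real (t (length w)))"
    if "w \<in> L" "max N 1 \<le> length w" for w
  proof -
    have "k * real (length w) * real (tm_time M w) \<le> k * real (length w) * (c * real (t (length w)))"
      using that time V(6) by (intro mult_left_mono) auto
    then show ?thesis using exp_time[of w] that by (auto simp: mult_ac intro: exp_time_le_mono)
  qed
  then show ?thesis using V by (intro exI[of _ V] exI[of _ "1/3 :: real"]) fastforce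
qed

theorem corollary1:
  shows "DSPACE_lin \<subseteq> (AM_q_1_2ADfA :: ('a::finite) list set set) \<and>
    (\<forall>(L :: 'a list set) (t :: nat \<Rightarrow> nat).
       (\<exists>M. wf_dtm M \<and> tm_decides M L \<and> tm_linear_space M \<and>
          (\<exists>c N. \<forall>w. N \<le> length w \<longrightarrow> real (tm_time M w) \<le> c * real (t (length w))))
       \<longrightarrow> (\<exists>V \<epsilon>. wf_verifier V \<and> rational_verifier V \<and> \<epsilon> < 1/2 \<and>
             (\<exists>P. valid_prover V P \<and> (\<forall>w\<in>L. acc_prob V P w \<ge> 1 - \<epsilon>) \<and>
                (\<exists>c N. \<forall>w\<in>L. N \<le> length w \<longrightarrow>
                   exp_time_le V P w (c * real (length w) * real (t (length w))))) \<and>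
             sound V L \<epsilon>))"
  using DSPACE_lin_subset_AM_q_1_2ADfA linear_space_time_verifier by blast

end
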